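(* Let $(A,d,\Delta,\mu)$ be a connected DG-bialgebra over $\mathbb{Z}_2$ and $\Omega A$ its reduced cobar construction. For $k\ge1$ define $E_{1,k}:\Omega A\otimes(\Omega A)^{\otimes k}\to\Omega A$ by $$E_{1,k}([a_1,\dots,a_n];y_1,\dots,y_k)=\sum_{1\le i_1<\cdots<i_k\le n}[a_1,\dots,a_{i_1-1},a_{i_1}\diamond y_1,a_{i_1+1},\dots,a_{i_k-1},a_{i_k}\diamond y_k,a_{i_k+1},\dots,a_n]$$ (so it is $0$ if $n<k$), and set $E_{1,0}(x)=x$. Then $(\Omega A,d_\Omega,\cdot,\{E_{1,k}\})$ is a homotopy G-algebra, i.e. for all $x,x_1,x_2,y_i,z_j\in\Omega A$: (1) (higher homotopies) for $k\ge1$, $d_\Omega E_{1,k}(x;y_1,\dots,y_k)+E_{1,k}(d_\Omega x;y_1,\dots,y_k)+\sum_{i}E_{1,k}(x;y_1,\dots,d_\Omega y_i,\dots,y_k)= y_1\cdot E_{1,k-1}(x;y_2,\dots,y_k)+E_{1,k-1}(x;y_1,\dots,y_{k-1})\cdot y_k+\sum_{i=1}^{k-1}E_{1,k-1}(x;y_1,\dots,y_i\cdot y_{i+1},\dots,y_k)$; (2) (distributivity) for $k\ge1$, $E_{1,k}(x_1\cdot x_2;y_1,\dots,y_k)=x_1\cdot E_{1,k}(x_2;y_1,\dots,y_k)+E_{1,k}(x_1;y_1,\dots,y_k)\cdot x_2+\sum_{p=1}^{k-1}E_{1,p}(x_1;y_1,\dots,y_p)\cdot E_{1,k-p}(x_2;y_{p+1},\dots,y_k)$;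 (3) (higher pre-Jacobi identities) for $m,n\ge1$, $E_{1,n}(E_{1,m}(x;y_1,\dots,y_m);z_1,\dots,z_n)=\sum E_{1,\,n-(n_1+\cdots+n_m)+m}\big(x;z_1,\dots,z_{i_1},E_{1,n_1}(y_1;z_{i_1+1},\dots,z_{i_1+n_1}),z_{i_1+n_1+1},\dots,z_{i_2},E_{1,n_2}(y_2;z_{i_2+1},\dots,z_{i_2+n_2}),\dots,z_{i_m},E_{1,n_m}(y_m;z_{i_m+1},\dots,z_{i_m+n_m}),z_{i_m+n_m+1},\dots,z_n\big)$, the sum over all $n_1,\dots,n_m\ge0$ and $0\le i_1\le i_1+n_1\le i_2\le i_2+n_2\le\cdots\le i_m\le i_m+n_m\le n$. In particular $E_{1,1}$ is the Adams $\smile_1$-product, $[a_1,\dots,a_m]\smile_1[b_1,\dots,b_n]=\sum_k[a_1,\dots,a_{k-1},a_k^{(1)}\cdot b_1,\dots,a_k^{(n)}\cdot b_n,a_{k+1},\dots,a_m]$.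
   Context: Work over $\mathbb{Z}_2$ (signs ignored). A DG-bialgebra $(A,d,\Delta,\mu)$ is a DG-coalgebra with counit together with an associative unital multiplication $a\cdot b=\mu(a\otimes b)$ which is a morphism of DG-coalgebras; connected means degree-0 part $\mathbb{Z}_2$; $\bar A$ is the positive part. $\Delta^s:A\to A^{\otimes s}$ is the iterated diagonal ($\Delta^1=\mathrm{id}$, $\Delta^s=(\Delta^{s-1}\otimes\mathrm{id})\Delta$), written $\Delta^s(a)=a^{(1)}\otimes\cdots\otimes a^{(s)}$ with summation understood. Write $\Delta=\mathrm{id}\otimes1+1\otimes\mathrm{id}+\Delta'$. The reduced cobar construction $\Omega A$ is the tensor algebra $T(s\bar A)$ with elements $[a_1,\dots,a_n]$, concatenation product $\cdot$, and differential the derivation $d_\Omega$ with $d_\Omega[a]=[da]+\sum[a',a'']$ for $\Delta'(a)=\sum a'\otimes a''$. For $a\in\bar A$ and $y=[b_1,\dots,b_s]\in\Omega A$, $a\diamond y$ denotes the string $a^{(1)}\cdot b_1,\dots,a^{(s)}\cdot b_s$ (using $\Delta^s(a)$), inserted into the bracket, extended linearly in $y$. *)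

theory Defs
  imports Main
begin

text \<open>A Z_2-vector space with basis of type 'x is represented by the finite subsets
  of 'x (a finite set = the sum of its elements).  Addition is symmetric difference.
  zsum f S is the Z_2-sum over s in S of the vectors f s.\<close>

definition zadd :: "'x set \<Rightarrow> 'x set \<Rightarrow> 'x set" where
  "zadd P Q = (P - Q) \<union> (Q - P)"

definition zsum :: "('i \<Rightarrow> 'x set) \<Rightarrow> 'i set \<Rightarrow> 'x set" where
  "zsum f S = {y. odd (card {s \<in> S. y \<in> f s})}"

text \<open>bunit is the unit 1 (a basis element), bcounit b is the value of the counit on
  the basis element b, bd b = d(b), bdiag b = Delta(b) in A (x) A (basis: pairs),
  bmult b c = b.c .  All maps are extended Z_2-linearly via zsum.\<close>

record 'b dgba =
  bdeg :: "'b \<Rightarrow> nat"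
  bd :: "'b \<Rightarrow> 'b set"
  bunit :: 'b
  bcounit :: "'b \<Rightarrow> bool"
  bdiag :: "'b \<Rightarrow> ('b \<times> 'b) set"
  bmult :: "'b \<Rightarrow> 'b \<Rightarrow> 'b set"

definition connected_dg_bialgebra :: "'b dgba \<Rightarrow> bool" where
  "connected_dg_bialgebra A \<longleftrightarrow>
     \<comment> \<open>finiteness (maps land in the vector space)\<close>
     (\<forall>b. finite (bd A b) \<and> finite (bdiag A b)) \<and> (\<forall>b c. finite (bmult A b c)) \<and>
     \<comment> \<open>grading: d homogeneous of degree +1 or -1, Delta, mu, counit of degree 0\<close>
     (\<exists>\<delta>::int. (\<delta> = 1 \<or> \<delta> = -1) \<and>
        (\<forall>b x. x \<in> bd A b \<longrightarrow> int (bdeg A x) = int (bdeg A b) + \<delta>)) \<and>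
     (\<forall>b x y. (x, y) \<in> bdiag A b \<longrightarrow> bdeg A x + bdeg A y = bdeg A b) \<and>
     (\<forall>b c x. x \<in> bmult A b c \<longrightarrow> bdeg A x = bdeg A b + bdeg A c) \<and>
     (\<forall>b. bcounit A b \<longrightarrow> bdeg A b = 0) \<and>
     \<comment> \<open>connected: the degree-0 part is spanned by the unit\<close>
     (\<forall>b. bdeg A b = 0 \<longleftrightarrow> b = bunit A) \<and>
     \<comment> \<open>DG-coalgebra with counit\<close>
     (\<forall>b. zsum (bd A) (bd A b) = {}) \<and>
     (\<forall>b. zsum (\<lambda>(x, y). zsum (\<lambda>(u, v). {(u, v, y)}) (bdiag A x)) (bdiag A b)
          = zsum (\<lambda>(x, y). zsum (\<lambda>(u, v). {(x, u, v)}) (bdiag A y)) (bdiag A b)) \<and>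
     (\<forall>b. zsum (\<lambda>(x, y). if bcounit A x then {y} else {}) (bdiag A b) = {b}) \<and>
     (\<forall>b. zsum (\<lambda>(x, y). if bcounit A y then {x} else {}) (bdiag A b) = {b}) \<and>
     (\<forall>b. zsum (bdiag A) (bd A b)
          = zsum (\<lambda>(x, y). zadd (zsum (\<lambda>u. {(u, y)}) (bd A x)) (zsum (\<lambda>v. {(x, v)}) (bd A y)))
                 (bdiag A b)) \<and>
     (\<forall>b. even (card {x \<in> bd A b. bcounit A x})) \<and>
     \<comment> \<open>associative unital multiplication\<close>
     (\<forall>b c g. zsum (\<lambda>x. bmult A x g) (bmult A b c) = zsum (\<lambda>x. bmult A b x) (bmult A c g)) \<and>
     (\<forall>b. bmult A (bunit A) b = {b} \<and> bmult A b (bunit A) = {b}) \<and>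
     \<comment> \<open>multiplication is a morphism of DG-coalgebras\<close>
     (\<forall>b c. zsum (bd A) (bmult A b c)
          = zadd (zsum (\<lambda>x. bmult A x c) (bd A b)) (zsum (\<lambda>x. bmult A b x) (bd A c))) \<and>
     (\<forall>b c. zsum (bdiag A) (bmult A b c)
          = zsum (\<lambda>((x1, y1), (x2, y2)). zsum (\<lambda>u. zsum (\<lambda>v. {(u, v)}) (bmult A y1 y2)) (bmult A x1 x2))
                 (bdiag A b \<times> bdiag A c)) \<and>
     (\<forall>b c. odd (card {x \<in> bmult A b c. bcounit A x}) \<longleftrightarrow> bcounit A b \<and> bcounit A c)"

text \<open>Basis of Omega A: words [a_1,...,a_n] of basis elements of A-bar (i.e. different
  from the unit); an element of Omega A is a finite set of such words.\<close>

definition Om :: "'b dgba \<Rightarrow> 'b list set \<Rightarrow> bool" where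
  "Om A X \<longleftrightarrow> finite X \<and> (\<forall>w\<in>X. bunit A \<notin> set w)"

definition omult :: "'b list set \<Rightarrow> 'b list set \<Rightarrow> 'b list set" where
  "omult X Y = zsum (\<lambda>v. zsum (\<lambda>w. {v @ w}) Y) X"

definition rdiag :: "'b dgba \<Rightarrow> 'b \<Rightarrow> ('b \<times> 'b) set" where
  "rdiag A a = zadd (bdiag A a) (zadd {(a, bunit A)} {(bunit A, a)})"

definition dgen :: "'b dgba \<Rightarrow> 'b \<Rightarrow> 'b list set" where
  "dgen A a = zadd (zsum (\<lambda>x. {[x]}) (bd A a)) (zsum (\<lambda>(x, y). {[x, y]}) (rdiag A a))"

definition dO_word :: "'b dgba \<Rightarrow> 'b list \<Rightarrow> 'b list set" where
  "dO_word A w = zsum (\<lambda>i. zsum (\<lambda>u. {take i w @ u @ drop (Suc i) w}) (dgen A (w ! i)))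
                      {..<length w}"

definition dO :: "'b dgba \<Rightarrow> 'b list set \<Rightarrow> 'b list set" where
  "dO A X = zsum (dO_word A) X"

text \<open>diag_iter A s b = Delta^s(b) in A^{(x)s} (basis: lists of length s);
  Delta^1 = id, Delta^s = (Delta^{s-1} (x) id) Delta; Delta^0 is the counit.\<close>
fun diag_iter :: "'b dgba \<Rightarrow> nat \<Rightarrow> 'b \<Rightarrow> 'b list set" where
  "diag_iter A 0 b = (if bcounit A b then {[]} else {})"
| "diag_iter A (Suc 0) b = {[b]}"
| "diag_iter A (Suc (Suc n)) b =
     zsum (\<lambda>(x, y). zsum (\<lambda>l. {l @ [y]}) (diag_iter A (Suc n) x)) (bdiag A b)"

text \<open>a \<diamond> [b_1,...,b_s] = the string a^(1).b_1, ..., a^(s).b_s (multilinearly expanded)\<close>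
definition diamond :: "'b dgba \<Rightarrow> 'b \<Rightarrow> 'b list \<Rightarrow> 'b list set" where
  "diamond A a w = zsum (\<lambda>cs. listset (map2 (bmult A) cs w)) (diag_iter A (length w) a)"

definition incseqs :: "nat \<Rightarrow> nat \<Rightarrow> nat list set" where
  "incseqs k n = {is. length is = k \<and> sorted_wrt (<) is \<and> set is \<subseteq> {..<n}}"

text \<open>E_{1,k} on basis words; 0-based positions i_1 < ... < i_k < n; the position j = i_r
  is replaced by a_j \<diamond> y_r, where r - 1 = number of chosen positions below j.\<close>
definition E_word :: "'b dgba \<Rightarrow> 'b list \<Rightarrow> 'b list list \<Rightarrow> 'b list set" where
  "E_word A x ys =
     (if ys = [] then {x} else
      zsum (\<lambda>is. zsum (\<lambda>cs. {concat cs})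
                   (listset (map (\<lambda>j. if j \<in> set is
                                        then diamond A (x ! j) (ys ! card {i \<in> set is. i < j})
                                        else {[x ! j]}) [0..<length x])))
           (incseqs (length ys) (length x)))"

definition E :: "'b dgba \<Rightarrow> 'b list set \<Rightarrow> 'b list set list \<Rightarrow> 'b list set" where
  "E A X Ys = zsum (\<lambda>x. zsum (\<lambda>ys. E_word A x ys) (listset Ys)) X"

text \<open>With 0-based j, is ! j = i_{j+1}, ns ! j = n_{j+1};
  jprev is ns j = i_j + n_j (and 0 for j = 0).\<close>
definition jprev :: "nat list \<Rightarrow> nat list \<Rightarrow> nat \<Rightarrow> nat" where
  "jprev is ns j = (if j = 0 then 0 else is ! (j - 1) + ns ! (j - 1))"

definition jac_index :: "nat \<Rightarrow> nat \<Rightarrow> (nat list \<times> nat list) set" where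
  "jac_index m n = {(is, ns). length is = m \<and> length ns = m \<and>
                       (\<forall>j<m. jprev is ns j \<le> is ! j) \<and> jprev is ns m \<le> n}"

definition jac_args :: "'b dgba \<Rightarrow> 'b list set list \<Rightarrow> 'b list set list \<Rightarrow> nat list \<Rightarrow> nat list
                          \<Rightarrow> 'b list set list" where
  "jac_args A ys zs is ns =
     concat (map (\<lambda>j. take (is ! j - jprev is ns j) (drop (jprev is ns j) zs)
                      @ [E A (ys ! j) (take (ns ! j) (drop (is ! j) zs))]) [0..<length ys])
     @ drop (jprev is ns (length ys)) zs"

definition cup1_word :: "'b dgba \<Rightarrow> 'b list \<Rightarrow> 'b list \<Rightarrow> 'b list set" where
  "cup1_word A a w = zsum (\<lambda>k. zsum (\<lambda>c. {take k a @ c @ drop (Suc k) a}) (diamond A (a ! k) w))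
                          {..<length a}"

definition cup1 :: "'b dgba \<Rightarrow> 'b list set \<Rightarrow> 'b list set \<Rightarrow> 'b list set" where
  "cup1 A X Y = zsum (\<lambda>x. zsum (\<lambda>y. cup1_word A x y) Y) X"

end

theory Submission
  imports Defs
begin

text \<open>
  Finite sets are read as vectors over \<open>\<int>\<^sub>2\<close>, words as elements of the monoid algebra, and every
  operation of the statement as a (multi)linear map; since a finite set is determined by its vector,
  each identity may be proved on vectors. There, for a letter \<open>a\<close>, \<open>E\<^sub>1\<^sub>,\<^sub>k([a]\<cdot>x; Y\<^sub>1, \<dots>) =
  [a]\<cdot>E\<^sub>1\<^sub>,\<^sub>k(x; Y\<^sub>1, \<dots>) + (a \<diamond> Y\<^sub>1)\<cdot>E\<^sub>1\<^sub>,\<^sub>k\<^sub>-\<^sub>1(x; Y\<^sub>2, \<dots>)\<close>, so all three identities can be proved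
  for basis words by induction on the word. Distributivity comes from splitting the argument list
  between the two factors. The pre-Jacobi identities rest on \<open>a \<diamond> (b \<diamond> Z) = (a\<cdot>b) \<diamond> Z\<close> (associativity
  of \<open>\<mu>\<close>, and \<open>\<mu>\<close> being a coalgebra map) and on \<open>a \<diamond> (Y\<cdot>Y') = \<Sum> (a' \<diamond> Y)\<cdot>(a'' \<diamond> Y')\<close> (coassociativity).
  For the homotopy formula the one-letter case is the key:
  \<open>d\<^sub>\<Omega>(a \<diamond> Y) + (d a) \<diamond> Y + a \<diamond> d\<^sub>\<Omega>Y = \<Sum> (a' \<diamond> Y)\<cdot>[a''] + [a']\<cdot>(a'' \<diamond> Y) + (a \<diamond> Y)\<cdot>[1] + [1]\<cdot>(a \<diamond> Y)\<close>,
  summed over \<open>\<Delta> a = \<Sum> a' \<otimes> a''\<close>; both sides are multiplicative along \<open>\<Delta>\<close> in \<open>Y\<close>, and they agree on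
  letters because \<open>d\<close> is a coderivation and \<open>\<mu>\<close> is a map of DG-coalgebras.
\<close>

section \<open>Finite sets as vectors over \<open>\<int>\<^sub>2\<close>\<close>

lemma zadd_assoc: "zadd (zadd a b) c = zadd a (zadd b c)"
  unfolding zadd_def by blast
lemma zadd_commute: "zadd a b = zadd b a"
  unfolding zadd_def by blast
lemma zadd_empty[simp]: "zadd {} a = a" "zadd a {} = a"
  unfolding zadd_def by blast+
lemma zadd_self[simp]: "zadd a a = {}"
  unfolding zadd_def by blast
lemma finite_zadd[simp]: "finite a \<Longrightarrow> finite b \<Longrightarrow> finite (zadd a b)"
  unfolding zadd_def by blast

typedef 'x zvec = "{X :: 'x set. finite X}" morphisms supp vec by auto

lemma finite_supp[simp]: "finite (supp X)"
  using supp by auto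

lemma supp_vec[simp]: "finite X \<Longrightarrow> supp (vec X) = X"
  by (simp add: vec_inverse)

instantiation zvec :: (type) ab_group_add
begin
definition zero_zvec_def: "0 = vec {}"
definition plus_zvec_def: "X + Y = vec (zadd (supp X) (supp Y))"
definition uminus_zvec_def: "- (X::'a zvec) = X"
definition minus_zvec_def: "(X::'a zvec) - Y = X + Y"
instance
proof
  fix a b c :: "'a zvec"
  show "a + b + c = a + (b + c)" unfolding plus_zvec_def by (simp add: zadd_assoc)
  show "a + b = b + a" unfolding plus_zvec_def by (simp add: zadd_commute)
  show "0 + a = a" unfolding plus_zvec_def zero_zvec_def by (simp add: supp_inverse)
  show "- a + a = 0" unfolding plus_zvec_def zero_zvec_def uminus_zvec_def by simp
  show "a - b = a + - b" unfolding minus_zvec_def uminus_zvec_def by simp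
qed
end

lemma zvec_add_self[simp]: "(X::'a zvec) + X = 0"
  by (metis ab_left_minus uminus_zvec_def)
lemma zvec_minus[simp]: "(X::'a zvec) - Y = X + Y" "- X = X"
  by (simp_all add: minus_zvec_def uminus_zvec_def)

lemma supp_zero[simp]: "supp 0 = {}"
  by (simp add: zero_zvec_def)
lemma supp_plus: "supp (X + Y) = zadd (supp X) (supp Y)"
  by (simp add: plus_zvec_def)

lemma vec_zadd: "finite A \<Longrightarrow> finite B \<Longrightarrow> vec (zadd A B) = vec A + vec B"
  by (simp add: plus_zvec_def)
lemma vec_empty[simp]: "vec {} = 0"
  by (simp add: zero_zvec_def)

definition basis :: "'x \<Rightarrow> 'x zvec" where "basis v = vec {v}"

lemma supp_basis[simp]: "supp (basis v) = {v}" by (simp add: basis_def)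

lemma sum_basis: "finite S \<Longrightarrow> sum basis S = vec S"
proof (induction S rule: finite_induct)
  case empty thus ?case by simp
next
  case (insert x F)
  have "vec (insert x F) = vec (zadd {x} F)"
    using insert by (simp add: zadd_def)
  also have "\<dots> = basis x + vec F" using insert by (simp add: vec_zadd basis_def)
  finally show ?case using insert by simp
qed

lemma zvec_decomp: "X = sum basis (supp X)"
  by (simp add: sum_basis supp_inverse)

lemma zsum_insert: "finite S \<Longrightarrow> s \<notin> S \<Longrightarrow> zsum f (insert s S) = zadd (f s) (zsum f S)"
proof -
  assume fin: "finite S" and ns: "s \<notin> S"
  have "\<And>y. card {t \<in> insert s S. y \<in> f t} = (if y \<in> f s then Suc (card {t \<in> S. y \<in> f t}) else card {t \<in> S. y \<in> f t})"
  proof -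
    fix y
    show "card {t \<in> insert s S. y \<in> f t} = (if y \<in> f s then Suc (card {t \<in> S. y \<in> f t}) else card {t \<in> S. y \<in> f t})"
    proof (cases "y \<in> f s")
      case True
      hence "{t \<in> insert s S. y \<in> f t} = insert s {t \<in> S. y \<in> f t}" by auto
      thus ?thesis using True fin ns by simp
    next
      case False
      hence "{t \<in> insert s S. y \<in> f t} = {t \<in> S. y \<in> f t}" by auto
      thus ?thesis using False by simp
    qed
  qed
  thus ?thesis unfolding zsum_def zadd_def by auto
qed

lemma zsum_empty[simp]: "zsum f {} = {}" by (simp add: zsum_def)

lemma finite_zsum: "finite S \<Longrightarrow> (\<And>s. s \<in> S \<Longrightarrow> finite (f s)) \<Longrightarrow> finite (zsum f S)"
proof (induction S rule: finite_induct)
  case empty thus ?case by simp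
next
  case (insert x F) thus ?case by (simp add: zsum_insert)
qed

lemma vec_zsum: "finite S \<Longrightarrow> (\<And>s. s \<in> S \<Longrightarrow> finite (f s)) \<Longrightarrow> vec (zsum f S) = (\<Sum>s\<in>S. vec (f s))"
proof (induction S rule: finite_induct)
  case empty thus ?case by simp
next
  case (insert x F)
  thus ?case by (simp add: zsum_insert vec_zadd finite_zsum)
qed

definition lin_ext :: "('x \<Rightarrow> 'y::ab_group_add) \<Rightarrow> 'x zvec \<Rightarrow> 'y" where
  "lin_ext f X = sum f (supp X)"

lemma sum_zadd_zvec: "finite A \<Longrightarrow> finite B \<Longrightarrow> sum (f :: _ \<Rightarrow> 'y zvec) (zadd A B) = sum f A + sum f B"
proof -
  assume fa: "finite A" and fb: "finite B"
  have e1: "A - (A \<inter> B) = A - B" "B - (A \<inter> B) = B - A" by blast+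
  have "sum f A = sum f (A - (A \<inter> B)) + sum f (A \<inter> B)"
    using fa by (intro sum.subset_diff) auto
  hence "sum f A = sum f (A - B) + sum f (A \<inter> B)" by (simp only: e1)
  moreover have "sum f B = sum f (B - (A \<inter> B)) + sum f (A \<inter> B)"
    using fb by (intro sum.subset_diff) auto
  hence "sum f B = sum f (B - A) + sum f (A \<inter> B)" by (simp only: e1)
  moreover have "sum f (zadd A B) = sum f (A - B) + sum f (B - A)"
    unfolding zadd_def using fa fb by (intro sum.union_disjoint) auto
  ultimately show ?thesis by (simp add: algebra_simps)
qed

lemma lin_ext_add[simp]: "lin_ext (f :: _ \<Rightarrow> 'y zvec) (X + Y) = lin_ext f X + lin_ext f Y"
  unfolding lin_ext_def by (simp add: supp_plus sum_zadd_zvec)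
lemma lin_ext_zero[simp]: "lin_ext f 0 = 0"
  unfolding lin_ext_def by simp
lemma lin_ext_basis[simp]: "lin_ext f (basis v) = f v"
  unfolding lin_ext_def by simp
lemma lin_ext_sum: "lin_ext (f :: _ \<Rightarrow> 'y zvec) (sum g S) = (\<Sum>s\<in>S. lin_ext f (g s))"
  by (induction S rule: infinite_finite_induct) auto
lemma lin_ext_vec: "finite S \<Longrightarrow> lin_ext f (vec S) = sum f S"
  by (simp add: lin_ext_def)
lemma lin_ext_fadd: "lin_ext (\<lambda>x. f x + g x) X = lin_ext f X + lin_ext g X"
  unfolding lin_ext_def by (simp add: sum.distrib)
lemma lin_ext_fzero[simp]: "lin_ext (\<lambda>x. 0) X = 0"
  unfolding lin_ext_def by simp
lemma lin_ext_fsum: "lin_ext (\<lambda>x. \<Sum>i\<in>I. f i x) X = (\<Sum>i\<in>I. lin_ext (f i) X)"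
  unfolding lin_ext_def by (rule sum.swap)
lemma lin_ext_basis_id[simp]: "lin_ext basis X = X"
  unfolding lin_ext_def by (metis zvec_decomp)
lemma lin_ext_cong: "(\<And>x. x \<in> supp X \<Longrightarrow> f x = g x) \<Longrightarrow> lin_ext f X = lin_ext g X"
  unfolding lin_ext_def by (rule sum.cong) auto
lemma lin_ext_lin_ext: "lin_ext (f :: _ \<Rightarrow> 'y zvec) (lin_ext g X) = lin_ext (\<lambda>x. lin_ext f (g x)) X"
proof -
  have "lin_ext f (lin_ext g X) = lin_ext f (sum g (supp X))" by (simp only: lin_ext_def[of g])
  also have "\<dots> = (\<Sum>x\<in>supp X. lin_ext f (g x))" by (rule lin_ext_sum)
  finally show ?thesis by (simp only: lin_ext_def[of "\<lambda>x. lin_ext f (g x)"])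
qed

definition zlinear :: "('x zvec \<Rightarrow> 'y zvec) \<Rightarrow> bool" where
  "zlinear T \<longleftrightarrow> (\<forall>X Y. T (X + Y) = T X + T Y)"

lemma zlinear_zero: "zlinear T \<Longrightarrow> T 0 = 0"
  unfolding zlinear_def by (metis add_cancel_right_right)
lemma zlinear_sum: "zlinear T \<Longrightarrow> T (sum g S) = (\<Sum>s\<in>S. T (g s))"
  by (induction S rule: infinite_finite_induct) (auto simp: zlinear_zero zlinear_def)
lemma zlinear_lin_ext: "zlinear T \<Longrightarrow> T (lin_ext f X) = lin_ext (\<lambda>x. T (f x)) X"
  unfolding lin_ext_def by (simp add: zlinear_sum)
lemma lin_ext_swap: "lin_ext (\<lambda>x. lin_ext (\<lambda>y. f x y) Y) X = lin_ext (\<lambda>y. lin_ext (\<lambda>x. f x y) X) Y"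
  unfolding lin_ext_def by (rule sum.swap)

section \<open>The monoid algebra of words\<close>

instantiation list :: (type) monoid_mult
begin
definition times_list_def: "(xs::'a list) * ys = xs @ ys"
definition one_list_def: "(1::'a list) = []"
instance by standard (auto simp: times_list_def one_list_def)
end

instantiation zvec :: (monoid_mult) ring_1
begin
definition times_zvec_def: "X * Y = lin_ext (\<lambda>v. lin_ext (\<lambda>w. basis (v * w)) Y) X"
definition one_zvec_def: "1 = basis 1"
instance
proof
  fix a b c :: "'a zvec"
  show "a * b * c = a * (b * c)" by (simp add: times_zvec_def lin_ext_lin_ext mult.assoc)
  show "(a + b) * c = a * c + b * c" by (simp add: times_zvec_def)
  show "a * (b + c) = a * b + a * c" by (simp add: times_zvec_def lin_ext_fadd)
  show "1 * a = a" by (simp add: one_zvec_def times_zvec_def)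
  show "a * 1 = a" by (simp add: one_zvec_def times_zvec_def)
  show "(0::'a zvec) \<noteq> 1" by (metis supp_basis supp_zero insert_not_empty one_zvec_def)
qed
end

lemma basis_mult: "basis v * basis w = basis (v * w)"
  by (simp add: times_zvec_def)
lemma mult_lin_ext_left: "(lin_ext f X :: 'a::monoid_mult zvec) * Z = lin_ext (\<lambda>x. f x * Z) X"
  by (simp add: times_zvec_def lin_ext_lin_ext)
lemma mult_lin_ext_right: "(Z :: 'a::monoid_mult zvec) * lin_ext f X = lin_ext (\<lambda>x. Z * f x) X"
  by (simp add: times_zvec_def lin_ext_lin_ext lin_ext_swap[of _ X])
lemma basis_append: "basis (v @ w) = basis v * basis w"
  by (simp add: basis_mult times_list_def)
lemma basis_Nil: "basis [] = 1"
  by (simp add: one_zvec_def one_list_def)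
lemma basis_Cons: "basis (a # w) = basis [a] * basis w"
  by (simp add: basis_append[symmetric])

fun mlin_ext :: "('x list \<Rightarrow> 'y zvec) \<Rightarrow> 'x zvec list \<Rightarrow> 'y zvec" where
  "mlin_ext f [] = f []"
| "mlin_ext f (Y # Ys) = lin_ext (\<lambda>y. mlin_ext (\<lambda>ys. f (y # ys)) Ys) Y"

lemma mlin_ext_linear: "zlinear T \<Longrightarrow> mlin_ext (\<lambda>ys. T (f ys)) Ys = T (mlin_ext f Ys)"
  by (induction Ys arbitrary: f) (auto simp: zlinear_lin_ext)

lemma mlin_ext_fzero[simp]: "mlin_ext (\<lambda>ys. 0) Ys = 0"
  by (induction Ys) auto

lemma mlin_ext_fsum: "mlin_ext (\<lambda>ys. \<Sum>i\<in>I. f i ys) Ys = (\<Sum>i\<in>I. mlin_ext (f i) Ys)"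
  by (induction Ys arbitrary: f) (auto simp: lin_ext_fsum)

lemma mlin_ext_cong: "(\<And>ys. length ys = length Ys \<Longrightarrow> (\<forall>i<length ys. ys ! i \<in> supp (Ys ! i)) \<Longrightarrow> f ys = g ys)
   \<Longrightarrow> mlin_ext f Ys = mlin_ext g Ys"
proof (induction Ys arbitrary: f g)
  case Nil thus ?case by simp
next
  case (Cons Y Ys)
  show ?case
    apply simp
    apply (rule lin_ext_cong)
    apply (rule Cons.IH)
    apply (rule Cons.prems)
     apply simp
    by (metis One_nat_def Suc_less_eq length_Cons less_Suc_eq_0_disj nth_Cons_0 nth_Cons_Suc)
qed

lemma linear_mult_left[simp]: "zlinear (\<lambda>X. (c::'a::monoid_mult zvec) * X)"
  unfolding zlinear_def by (simp add: distrib_left)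
lemma mlin_ext_mult_left: "mlin_ext (\<lambda>ys. (c::'a::monoid_mult zvec) * f ys) Ys = c * mlin_ext f Ys"
  using mlin_ext_linear[OF linear_mult_left] .
lemma lin_ext_mult_left: "lin_ext (\<lambda>y. (c::'a::monoid_mult zvec) * f y) Y = c * lin_ext f Y"
  by (simp add: mult_lin_ext_right)
lemma lin_ext_mult_right: "lin_ext (\<lambda>y. f y * (c::'a::monoid_mult zvec)) Y = lin_ext f Y * c"
  by (simp add: mult_lin_ext_left)

lemma mlin_ext_split:
  "mlin_ext (\<lambda>ys. f (take p ys) * g (drop p ys)) Ys = mlin_ext f (take p Ys) * (mlin_ext g (drop p Ys) :: 'a::monoid_mult zvec)"
proof (induction Ys arbitrary: p f)
  case Nil thus ?case by simp
next
  case (Cons Y Ys)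
  show ?case
  proof (cases p)
    case 0 thus ?thesis by (simp add: mlin_ext_mult_left)
  next
    case (Suc q)
    have "mlin_ext (\<lambda>ys. f (take p ys) * g (drop p ys)) (Y # Ys)
        = lin_ext (\<lambda>y. mlin_ext (\<lambda>ys. f (y # take q ys) * g (drop q ys)) Ys) Y" using Suc by simp
    also have "\<dots> = lin_ext (\<lambda>y. mlin_ext (\<lambda>ys. f (y # ys)) (take q Ys) * mlin_ext g (drop q Ys)) Y"
    proof (rule lin_ext_cong)
      fix y
      show "mlin_ext (\<lambda>ys. f (y # take q ys) * g (drop q ys)) Ys = mlin_ext (\<lambda>ys. f (y # ys)) (take q Ys) * mlin_ext g (drop q Ys)"
        using Cons.IH[where p=q and f="\<lambda>ys. f (y # ys)"] by simp
    qed
    also have "\<dots> = mlin_ext f (take p (Y # Ys)) * mlin_ext g (drop p (Y # Ys))"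
      using Suc by (simp add: lin_ext_mult_right)
    finally show ?thesis .
  qed
qed

lemma finite_listset: "(\<And>A. A \<in> set As \<Longrightarrow> finite A) \<Longrightarrow> finite (listset As)"
proof (induction As)
  case Nil thus ?case by simp
next
  case (Cons A As)
  have "listset (A # As) = (\<lambda>(x, xs). x # xs) ` (A \<times> listset As)"
    by (auto simp: set_Cons_def)
  thus ?case using Cons by simp
qed

lemma sum_listset_Cons:
  assumes "finite A" "\<And>B. B \<in> set As \<Longrightarrow> finite B"
  shows "(\<Sum>xs\<in>listset (A # As). h xs) = (\<Sum>x\<in>A. \<Sum>xs\<in>listset As. h (x # xs))"
proof -
  have e: "listset (A # As) = (\<lambda>p. fst p # snd p) ` (A \<times> listset As)"
    by (auto simp: set_Cons_def image_iff)
  have inj: "inj_on (\<lambda>p. fst p # snd p) (A \<times> listset As)" by (auto simp: inj_on_def)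
  have "(\<Sum>x\<in>A. \<Sum>xs\<in>listset As. h (x # xs)) = (\<Sum>p\<in>A \<times> listset As. h (fst p # snd p))"
    by (simp add: sum.cartesian_product split_def)
  also have "\<dots> = (\<Sum>xs\<in>listset (A # As). h xs)"
    unfolding e sum.reindex[OF inj] by (simp add: o_def)
  finally show ?thesis by simp
qed

lemma sum_listset_mlin_ext:
  assumes "\<And>B. B \<in> set As \<Longrightarrow> finite B"
  shows "(\<Sum>xs\<in>listset As. (h xs :: 'y zvec)) = mlin_ext h (map vec As)"
  using assms
proof (induction As arbitrary: h)
  case Nil thus ?case by simp
next
  case (Cons A As)
  have fA: "finite A" using Cons by simp
  show ?case
    using Cons by (simp add: sum_listset_Cons lin_ext_vec del: listset.simps(2))
qed

lemma vec_zsum_listset: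
  assumes "\<And>B. B \<in> set As \<Longrightarrow> finite B" "\<And>xs. xs \<in> listset As \<Longrightarrow> finite (F xs)"
  shows "vec (zsum F (listset As)) = mlin_ext (\<lambda>xs. vec (F xs)) (map vec As)"
  using assms by (simp add: vec_zsum finite_listset sum_listset_mlin_ext)

lemma mlin_ext_concat: "mlin_ext (\<lambda>cs. basis (concat cs)) Ys = prod_list (Ys :: 'b list zvec list)"
proof (induction Ys)
  case Nil thus ?case by (simp add: basis_Nil)
next
  case (Cons Y Ys)
  have "mlin_ext (\<lambda>cs. basis (concat cs)) (Y # Ys) = lin_ext (\<lambda>y. mlin_ext (\<lambda>ys. basis y * basis (concat ys)) Ys) Y"
    by (simp add: basis_append)
  also have "\<dots> = lin_ext (\<lambda>y. basis y * prod_list Ys) Y" by (simp add: mlin_ext_mult_left Cons.IH)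
  also have "\<dots> = Y * prod_list Ys" by (simp add: lin_ext_mult_right)
  finally show ?case by simp
qed

lemma vec_concat_listset:
  assumes "\<And>B. B \<in> set As \<Longrightarrow> finite B"
  shows "vec (zsum (\<lambda>cs. {concat cs}) (listset As)) = prod_list (map vec As)"
  using assms by (simp add: vec_zsum_listset mlin_ext_concat[symmetric] basis_def)

lemma finite_omult: "finite X \<Longrightarrow> finite Y \<Longrightarrow> finite (omult X Y)"
  unfolding omult_def by (intro finite_zsum) auto

lemma vec_omult: "finite X \<Longrightarrow> finite Y \<Longrightarrow> vec (omult X Y) = vec X * vec Y"
proof -
  assume fX: "finite X" and fY: "finite Y"
  have "vec (omult X Y) = (\<Sum>v\<in>X. vec (zsum (\<lambda>w. {v @ w}) Y))"
    unfolding omult_def using fX fY by (intro vec_zsum finite_zsum) auto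
  also have "\<dots> = (\<Sum>v\<in>X. \<Sum>w\<in>Y. basis (v @ w))"
    using fY by (simp add: vec_zsum basis_def)
  also have "\<dots> = vec X * vec Y"
    using fX fY by (simp add: times_zvec_def lin_ext_vec basis_mult times_list_def)
  finally show ?thesis .
qed

lemma vec_supp [simp]: "vec (supp X) = X"
  by (fact supp_inverse)

lemma vec_comp_supp [simp]: "vec \<circ> supp = id"
  by auto

lemma eq_suppI: "finite P \<Longrightarrow> vec P = V \<Longrightarrow> P = supp V"
  by auto

lemma zadd_eq_supp: "finite P \<Longrightarrow> finite Q \<Longrightarrow> zadd P Q = supp (vec P + vec Q)"
  by (intro eq_suppI finite_zadd vec_zadd)

lemma zsum_eq_supp: "finite S \<Longrightarrow> (\<And>s. s \<in> S \<Longrightarrow> finite (f s)) \<Longrightarrow> zsum f S = supp (\<Sum>s\<in>S. vec (f s))"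
  by (intro eq_suppI finite_zsum vec_zsum)

lemma omult_eq_supp: "finite P \<Longrightarrow> finite Q \<Longrightarrow> omult P Q = supp (vec P * vec Q)"
  by (intro eq_suppI finite_omult vec_omult)

(* The premise uses \<open>=simp=>\<close> so that, as a congruence rule, it lets the simplifier use
   \<open>s \<in> T\<close> (typically an index bound) under the binder. *)
lemma zsum_cong: "S = T \<Longrightarrow> (\<And>s. s \<in> T =simp=> f s = g s) \<Longrightarrow> zsum f S = zsum g T"
  unfolding zsum_def simp_implies_def by (metis (mono_tags, lifting) Collect_cong)

lemma zsum_subset: "zsum f S \<subseteq> \<Union> (f ` S)"
proof
  fix x assume "x \<in> zsum f S"
  hence "odd (card {s \<in> S. x \<in> f s})" by (simp add: zsum_def)
  hence "{s \<in> S. x \<in> f s} \<noteq> {}" by (metis card.empty even_zero)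
  thus "x \<in> \<Union> (f ` S)" by blast
qed

definition homog :: "nat \<Rightarrow> 'a list zvec \<Rightarrow> bool" where
  "homog n U \<longleftrightarrow> (\<forall>u\<in>supp U. length u = n)"

lemma supp_sum_subset: "supp (sum f S) \<subseteq> (\<Union>s\<in>S. supp (f s))"
proof (induction S rule: infinite_finite_induct)
  case (insert x F)
  thus ?case by (auto simp: supp_plus zadd_def)
qed auto

lemma if_one_mult[simp]: "(if P then 1 else 0) * (x::'a::ring_1) = (if P then x else 0)" by (cases P) simp_all
lemma mult_if_one[simp]: "(x::'a::ring_1) * (if P then 1 else 0) = (if P then x else 0)" by (cases P) simp_all

lemma homog_sum: "(\<And>x. x \<in> S \<Longrightarrow> homog n (f x)) \<Longrightarrow> homog n (sum f S)"
proof -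
  assume h: "\<And>x. x \<in> S \<Longrightarrow> homog n (f x)"
  show "homog n (sum f S)" unfolding homog_def
  proof
    fix u assume "u \<in> supp (sum f S)"
    then obtain x where "x \<in> S" "u \<in> supp (f x)" using supp_sum_subset[of f S] by auto
    thus "length u = n" using h unfolding homog_def by auto
  qed
qed
lemma homog_lin_ext: "(\<And>x. x \<in> supp X \<Longrightarrow> homog n (f x)) \<Longrightarrow> homog n (lin_ext f X)"
  unfolding lin_ext_def by (rule homog_sum)
lemma homog_zero[simp]: "homog n 0" unfolding homog_def by simp
lemma homog_basis[simp]: "homog n (basis w) \<longleftrightarrow> length w = n" unfolding homog_def by simp
lemma homog_one[simp]: "homog 0 (1 :: 'a list zvec)" by (simp add: basis_Nil[symmetric])
lemma homog_mult: "homog m U \<Longrightarrow> homog n V \<Longrightarrow> homog (m + n) (U * V)"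
proof -
  assume hU: "homog m U" and hV: "homog n V"
  have "U * V = lin_ext (\<lambda>v. lin_ext (\<lambda>w. basis (v * w)) V) U" by (simp add: times_zvec_def)
  moreover have "\<And>v. v \<in> supp U \<Longrightarrow> homog (m + n) (lin_ext (\<lambda>w. basis (v * w)) V)"
  proof -
    fix v assume v: "v \<in> supp U"
    show "homog (m + n) (lin_ext (\<lambda>w. basis (v * w)) V)"
    proof (rule homog_lin_ext)
      fix w assume "w \<in> supp V"
      thus "homog (m + n) (basis (v * w))" using v hU hV by (simp add: homog_def times_list_def)
    qed
  qed
  ultimately show ?thesis by (simp add: homog_lin_ext)
qed
definition susp :: "'b zvec \<Rightarrow> 'b list zvec" where "susp X = lin_ext (\<lambda>x. basis [x]) X"

lemma homog_susp[simp]: "homog (Suc 0) (susp X)" unfolding susp_def by (auto intro!: homog_lin_ext)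
lemma susp_basis[simp]: "susp (basis x) = basis [x]" by (simp add: susp_def)
lemma susp_add[simp]: "susp (X + Y) = susp X + susp Y" by (simp add: susp_def)
lemma mlin_ext_basis_eq_prod_susp: "mlin_ext basis Ys = prod_list (map susp Ys)"
proof (induction Ys)
  case Nil thus ?case by (simp add: basis_Nil)
next
  case (Cons Y Ys)
  have "mlin_ext basis (Y # Ys) = lin_ext (\<lambda>y. mlin_ext (\<lambda>ys. basis [y] * basis ys) Ys) Y"
    by (simp add: basis_Cons[symmetric])
  also have "\<dots> = lin_ext (\<lambda>y. basis [y] * mlin_ext basis Ys) Y" by (simp only: mlin_ext_mult_left)
  also have "\<dots> = susp Y * mlin_ext basis Ys" by (simp add: lin_ext_mult_right susp_def)
  finally show ?case using Cons by simp
qed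

lemma vec_listset: "(\<And>B. B \<in> set As \<Longrightarrow> finite B) \<Longrightarrow> vec (listset As) = prod_list (map (\<lambda>B. susp (vec B)) As)"
proof -
  assume f: "\<And>B. B \<in> set As \<Longrightarrow> finite B"
  have "vec (listset As) = (\<Sum>xs\<in>listset As. basis xs)" using f by (simp add: sum_basis finite_listset)
  also have "\<dots> = mlin_ext basis (map vec As)" using f by (rule sum_listset_mlin_ext)
  also have "\<dots> = prod_list (map (\<lambda>B. susp (vec B)) As)" by (simp add: mlin_ext_basis_eq_prod_susp o_def)
  finally show ?thesis .
qed

section \<open>Index combinatorics\<close>

lemma incseqs_0: "incseqs k 0 = (if k = 0 then {[]} else {})"
  unfolding incseqs_def by auto

lemma incseqs_Nil: "incseqs 0 n = {[]}"
  unfolding incseqs_def by auto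

lemma finite_incseqs[simp]: "finite (incseqs k n)"
proof -
  have "incseqs k n \<subseteq> {xs. set xs \<subseteq> {..<n} \<and> length xs = k}"
    unfolding incseqs_def by auto
  thus ?thesis by (rule finite_subset) (simp add: finite_lists_length_eq)
qed

lemma incseqs_Suc_shift: "is \<in> incseqs k n \<longleftrightarrow> map Suc is \<in> incseqs k (Suc n)"
  unfolding incseqs_def by (auto simp: sorted_wrt_map)

lemma incseqs_Suc_zero: "is \<in> incseqs k n \<longleftrightarrow> 0 # map Suc is \<in> incseqs (Suc k) (Suc n)"
  unfolding incseqs_def by (auto simp: sorted_wrt_map)

lemma incseqs_Suc:
  "incseqs k (Suc n) = map Suc ` incseqs k n \<union> (case k of 0 \<Rightarrow> {} | Suc k' \<Rightarrow> (\<lambda>is. 0 # map Suc is) ` incseqs k' n)"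
proof (intro equalityI subsetI)
  fix "is" assume "is": "is \<in> incseqs k (Suc n)"
  hence len: "length is = k" and sw: "sorted_wrt (<) is" and sub: "set is \<subseteq> {..<Suc n}"
    unfolding incseqs_def by auto
  show "is \<in> map Suc ` incseqs k n \<union> (case k of 0 \<Rightarrow> {} | Suc k' \<Rightarrow> (\<lambda>is. 0 # map Suc is) ` incseqs k' n)"
  proof (cases "0 \<in> set is")
    case False
    hence e: "is = map Suc (map (\<lambda>i. i - 1) is)"
      by (induction "is") auto
    hence "map (\<lambda>i. i - 1) is \<in> incseqs k n"
      using "is" incseqs_Suc_shift by metis
    thus ?thesis using e by blast
  next
    case True
    then obtain i0 rest where c: "is = i0 # rest" by (cases "is") auto
    have "i0 = 0"
    proof (rule ccontr)
      assume "i0 \<noteq> 0"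
      hence "0 \<in> set rest" using True c by auto
      moreover have "\<forall>j\<in>set rest. i0 < j" using sw c by auto
      ultimately show False by auto
    qed
    have pos: "\<forall>j\<in>set rest. 0 < j" using sw c \<open>i0 = 0\<close> by auto
    hence e: "rest = map Suc (map (\<lambda>i. i - 1) rest)"
      by (induction rest) auto
    obtain k' where k: "k = Suc k'" using len c by (cases k) auto
    have "0 # map Suc (map (\<lambda>i. i - 1) rest) \<in> incseqs (Suc k') (Suc n)"
      using "is" c \<open>i0 = 0\<close> e k by simp
    hence "map (\<lambda>i. i - 1) rest \<in> incseqs k' n" using incseqs_Suc_zero by blast
    thus ?thesis using c \<open>i0 = 0\<close> e k by force
  qed
next
  fix "is" assume "is \<in> map Suc ` incseqs k n \<union> (case k of 0 \<Rightarrow> {} | Suc k' \<Rightarrow> (\<lambda>is. 0 # map Suc is) ` incseqs k' n)"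
  thus "is \<in> incseqs k (Suc n)"
    using incseqs_Suc_shift incseqs_Suc_zero by (cases k) auto
qed

lemma jprev_0[simp]: "jprev is ns 0 = 0" by (simp add: jprev_def)
lemma jprev_Suc[simp]: "jprev is ns (Suc j) = is ! j + ns ! j" by (simp add: jprev_def)

lemma jac_indexD:
  assumes "(is, ns) \<in> jac_index m n"
  shows "length is = m" "length ns = m" "\<And>j. j < m \<Longrightarrow> jprev is ns j \<le> is ! j" "jprev is ns m \<le> n"
  using assms unfolding jac_index_def by auto

lemma jprev_mono:
  assumes "(is, ns) \<in> jac_index m n" "j \<le> k" "k \<le> m"
  shows "jprev is ns j \<le> jprev is ns k"
  using assms(2,3)
proof (induction k)
  case 0 thus ?case by simp
next
  case (Suc k)
  show ?case
  proof (cases "j = Suc k")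
    case True thus ?thesis by simp
  next
    case False
    hence "jprev is ns j \<le> jprev is ns k" using Suc by simp
    also have "\<dots> \<le> is ! k" using jac_indexD(3)[OF assms(1)] Suc by simp
    also have "\<dots> \<le> jprev is ns (Suc k)" by simp
    finally show ?thesis .
  qed
qed

lemma jac_bounds:
  assumes "(is, ns) \<in> jac_index m n" "j < m"
  shows "is ! j \<le> n" "ns ! j \<le> n" "is ! j + ns ! j \<le> n"
proof -
  have "jprev is ns (Suc j) \<le> jprev is ns m" using jprev_mono[OF assms(1), of "Suc j" m] assms(2) by simp
  hence "is ! j + ns ! j \<le> n" using jac_indexD(4)[OF assms(1)] by simp
  thus "is ! j \<le> n" "ns ! j \<le> n" "is ! j + ns ! j \<le> n" by auto
qed

lemma finite_jac_index[simp]: "finite (jac_index m n)"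
proof -
  have "jac_index m n \<subseteq> {is. set is \<subseteq> {..n} \<and> length is = m} \<times> {ns. set ns \<subseteq> {..n} \<and> length ns = m}"
  proof
    fix q assume q: "q \<in> jac_index m n"
    obtain "is" ns where qq: "q = (is, ns)" by (cases q)
    have "set is \<subseteq> {..n}" "set ns \<subseteq> {..n}"
      using jac_bounds[OF q[unfolded qq]] jac_indexD(1,2)[OF q[unfolded qq]]
      by (auto simp: in_set_conv_nth)
    thus "q \<in> {is. set is \<subseteq> {..n} \<and> length is = m} \<times> {ns. set ns \<subseteq> {..n} \<and> length ns = m}"
      using jac_indexD(1,2)[OF q[unfolded qq]] qq by auto
  qed
  thus ?thesis by (rule finite_subset) (simp add: finite_lists_length_eq)
qed

lemma jac_index_0: "jac_index 0 n = {([], [])}"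
  unfolding jac_index_def by (auto simp: jprev_def)

lemma jprev_shift: "0 < j \<Longrightarrow> j \<le> length is \<Longrightarrow> jprev (map Suc is) ns j = Suc (jprev is ns j)"
  by (simp add: jprev_def)

lemma jac_shift_mem: "(map Suc is, ns) \<in> jac_index m (Suc n) \<longleftrightarrow> (is, ns) \<in> jac_index m n"
proof -
  have "jprev (map Suc is) ns j \<le> map Suc is ! j \<longleftrightarrow> jprev is ns j \<le> is ! j" if "j < length is" for j
    using that by (cases j) (auto simp: jprev_def)
  moreover have "jprev (map Suc is) ns (length is) \<le> Suc n \<longleftrightarrow> jprev is ns (length is) \<le> n"
    by (cases "length is") (auto simp: jprev_def)
  ultimately show ?thesis unfolding jac_index_def by auto
qed

lemma jprev_zero: "0 < j \<Longrightarrow> j \<le> Suc (length is) \<Longrightarrow> jprev (0 # map (\<lambda>i. i + p) is) (p # ns) j = jprev is ns (j - 1) + p"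
  by (cases j; cases "j - 1") (auto simp: jprev_def nth_Cons split: nat.splits)

lemma jac_zero_mem: "(0 # map (\<lambda>i. i + p) is, p # ns) \<in> jac_index (Suc m) n \<longleftrightarrow> p \<le> n \<and> (is, ns) \<in> jac_index m (n - p)"
proof
  assume a: "(0 # map (\<lambda>i. i + p) is, p # ns) \<in> jac_index (Suc m) n"
  have l: "length is = m" "length ns = m" using jac_indexD(1,2)[OF a] by auto
  have "jprev (0 # map (\<lambda>i. i + p) is) (p # ns) 1 \<le> jprev (0 # map (\<lambda>i. i + p) is) (p # ns) (Suc m)"
    using jprev_mono[OF a, of 1 "Suc m"] by simp
  hence pn: "p \<le> n" using jac_indexD(4)[OF a] by simp
  have c: "jprev is ns j \<le> is ! j" if "j < m" for j
    using jac_indexD(3)[OF a, of "Suc j"] that l jprev_zero[of "Suc j" "is" p ns] by simp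
  have "jprev is ns m + p \<le> n"
    using jac_indexD(4)[OF a] l jprev_zero[of "Suc m" "is" p ns] by simp
  thus "p \<le> n \<and> (is, ns) \<in> jac_index m (n - p)"
    using pn c l unfolding jac_index_def by auto
next
  assume a: "p \<le> n \<and> (is, ns) \<in> jac_index m (n - p)"
  hence l: "length is = m" "length ns = m" using jac_indexD(1,2) by auto
  have c: "jprev (0 # map (\<lambda>i. i + p) is) (p # ns) j \<le> (0 # map (\<lambda>i. i + p) is) ! j" if "j < Suc m" for j
  proof (cases j)
    case 0 thus ?thesis by simp
  next
    case (Suc j')
    thus ?thesis using jac_indexD(3)[of "is" ns m "n - p" j'] a that l jprev_zero[of j "is" p ns] by simp
  qed
  have "jprev (0 # map (\<lambda>i. i + p) is) (p # ns) (Suc m) \<le> n"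
    using jprev_zero[of "Suc m" "is" p ns] l jac_indexD(4)[of "is" ns m "n - p"] a by (simp add: le_diff_conv2)
  thus "(0 # map (\<lambda>i. i + p) is, p # ns) \<in> jac_index (Suc m) n"
    using c l unfolding jac_index_def by auto
qed

lemma jac_pos_image:
  assumes "0 < m"
  shows "{q \<in> jac_index m (Suc n). 0 < fst q ! 0} = (\<lambda>(is, ns). (map Suc is, ns)) ` jac_index m n"
proof (intro equalityI subsetI)
  fix q assume q: "q \<in> {q \<in> jac_index m (Suc n). 0 < fst q ! 0}"
  obtain "is" ns where qq: "q = (is, ns)" by (cases q)
  have J: "(is, ns) \<in> jac_index m (Suc n)" and pos: "0 < is ! 0" using q qq by auto
  have l: "length is = m" using jac_indexD(1)[OF J] .
  have allpos: "0 < is ! j" if "j < m" for j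
  proof (cases j)
    case 0 thus ?thesis using pos by simp
  next
    case (Suc j')
    have "jprev is ns 1 \<le> jprev is ns j" using jprev_mono[OF J, of 1 j] that Suc by simp
    also have "\<dots> \<le> is ! j" using jac_indexD(3)[OF J] that by simp
    finally show ?thesis using pos by simp
  qed
  have e: "is = map Suc (map (\<lambda>i. i - 1) is)"
    by (rule nth_equalityI) (use allpos l in auto)
  have "(map (\<lambda>i. i - 1) is, ns) \<in> jac_index m n"
    using J e jac_shift_mem by metis
  thus "q \<in> (\<lambda>(is, ns). (map Suc is, ns)) ` jac_index m n"
    using qq e by (auto intro!: image_eqI[where x="(map (\<lambda>i. i - 1) is, ns)"])
next
  fix q assume "q \<in> (\<lambda>(is, ns). (map Suc is, ns)) ` jac_index m n"
  then obtain "is" ns where q: "q = (map Suc is, ns)" and J: "(is, ns) \<in> jac_index m n" by auto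
  have "length is = m" using jac_indexD(1)[OF J] .
  thus "q \<in> {q \<in> jac_index m (Suc n). 0 < fst q ! 0}"
    using q J jac_shift_mem assms by auto
qed

lemma jac_pos_empty:
  assumes "0 < m"
  shows "{q \<in> jac_index m 0. 0 < fst q ! 0} = {}"
proof -
  have "fst q ! 0 = 0" if q: "q \<in> jac_index m 0" for q
    using jac_bounds(1)[of "fst q" "snd q" m 0 0] q assms by simp
  thus ?thesis by auto
qed

lemma jac_zero_image:
  "{q \<in> jac_index (Suc m) n. fst q ! 0 = 0}
   = (\<lambda>(p, (is, ns)). (0 # map (\<lambda>i. i + p) is, p # ns)) ` (SIGMA p:{..n}. jac_index m (n - p))"
proof (intro equalityI subsetI)
  fix q assume q: "q \<in> {q \<in> jac_index (Suc m) n. fst q ! 0 = 0}"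
  obtain is0 ns0 where qq: "q = (is0, ns0)" by (cases q)
  have J: "(is0, ns0) \<in> jac_index (Suc m) n" and z: "is0 ! 0 = 0" using q qq by auto
  obtain i0 "is" where i: "is0 = i0 # is" using jac_indexD(1)[OF J] by (cases is0) auto
  obtain p ns where nn: "ns0 = p # ns" using jac_indexD(2)[OF J] by (cases ns0) auto
  have i0: "i0 = 0" using z i by simp
  have l: "length is = m" "length ns = m" using jac_indexD(1,2)[OF J] i nn by auto
  have ge: "p \<le> is ! j" if "j < m" for j
  proof -
    have "jprev is0 ns0 1 \<le> jprev is0 ns0 (Suc j)" using jprev_mono[OF J, of 1 "Suc j"] that by simp
    also have "\<dots> \<le> is0 ! Suc j" using jac_indexD(3)[OF J, of "Suc j"] that by simp
    finally show ?thesis using i nn i0 by simp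
  qed
  have e: "is = map (\<lambda>i. i + p) (map (\<lambda>i. i - p) is)"
    by (rule nth_equalityI) (use ge l in auto)
  have mem: "(0 # map (\<lambda>i. i + p) (map (\<lambda>i. i - p) is), p # ns) \<in> jac_index (Suc m) n"
    using J i nn i0 e by simp
  hence "p \<le> n \<and> (map (\<lambda>i. i - p) is, ns) \<in> jac_index m (n - p)"
    using jac_zero_mem by blast
  thus "q \<in> (\<lambda>(p, (is, ns)). (0 # map (\<lambda>i. i + p) is, p # ns)) ` (SIGMA p:{..n}. jac_index m (n - p))"
    using qq i nn i0 e by (auto intro!: image_eqI[where x="(p, (map (\<lambda>i. i - p) is, ns))"])
next
  fix q assume "q \<in> (\<lambda>(p, (is, ns)). (0 # map (\<lambda>i. i + p) is, p # ns)) ` (SIGMA p:{..n}. jac_index m (n - p))"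
  then obtain p "is" ns where q: "q = (0 # map (\<lambda>i. i + p) is, p # ns)" and pn: "p \<le> n"
    and J: "(is, ns) \<in> jac_index m (n - p)" by auto
  thus "q \<in> {q \<in> jac_index (Suc m) n. fst q ! 0 = 0}"
    using jac_zero_mem by auto
qed

section \<open>Connected DG-bialgebras\<close>

locale cdg_bialgebra =
  fixes A :: "'b dgba"
  assumes connected: "connected_dg_bialgebra A"
begin

abbreviation unitA where "unitA \<equiv> bunit A"
abbreviation eps where "eps \<equiv> bcounit A"
abbreviation deg where "deg \<equiv> bdeg A"

lemmas bialgebra_laws = connected[unfolded connected_dg_bialgebra_def]

lemma finite_bd [simp]: "finite (bd A b)" using bialgebra_laws by simp
lemma finite_bdiag [simp]: "finite (bdiag A b)" using bialgebra_laws by simp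
lemma finite_bmult [simp]: "finite (bmult A b c)" using bialgebra_laws by simp
lemma deg_bdiag: "(x, y) \<in> bdiag A b \<Longrightarrow> deg x + deg y = deg b" using bialgebra_laws by simp
lemma deg_counit: "eps b \<Longrightarrow> deg b = 0" using bialgebra_laws by simp
lemma deg_eq_0_iff: "deg b = 0 \<longleftrightarrow> b = unitA" using bialgebra_laws by simp
lemma bdiag_coassoc:
  "zsum (\<lambda>(x, y). zsum (\<lambda>(u, v). {(u, v, y)}) (bdiag A x)) (bdiag A b)
   = zsum (\<lambda>(x, y). zsum (\<lambda>(u, v). {(x, u, v)}) (bdiag A y)) (bdiag A b)"
  using bialgebra_laws by simp
lemma bdiag_counit_left: "zsum (\<lambda>(x, y). if eps x then {y} else {}) (bdiag A b) = {b}"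
  using bialgebra_laws by simp
lemma bdiag_counit_right: "zsum (\<lambda>(x, y). if eps y then {x} else {}) (bdiag A b) = {b}"
  using bialgebra_laws by simp
lemma bdiag_bd:
  "zsum (bdiag A) (bd A b)
   = zsum (\<lambda>(x, y). zadd (zsum (\<lambda>u. {(u, y)}) (bd A x)) (zsum (\<lambda>v. {(x, v)}) (bd A y))) (bdiag A b)"
  using bialgebra_laws by simp
lemma even_counit_bd: "even (card {x \<in> bd A b. eps x})" using bialgebra_laws by simp
lemma bmult_assoc: "zsum (\<lambda>x. bmult A x g) (bmult A b c) = zsum (\<lambda>x. bmult A b x) (bmult A c g)"
  using bialgebra_laws by simp
lemma bmult_unit: "bmult A unitA b = {b}" "bmult A b unitA = {b}" using bialgebra_laws by simp_all
lemma bd_bmult: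
  "zsum (bd A) (bmult A b c) = zadd (zsum (\<lambda>x. bmult A x c) (bd A b)) (zsum (\<lambda>x. bmult A b x) (bd A c))"
  using bialgebra_laws by simp
lemma bdiag_bmult:
  "zsum (bdiag A) (bmult A b c)
   = zsum (\<lambda>((x1, y1), (x2, y2)). zsum (\<lambda>u. zsum (\<lambda>v. {(u, v)}) (bmult A y1 y2)) (bmult A x1 x2))
          (bdiag A b \<times> bdiag A c)"
  using bialgebra_laws by simp
lemma odd_counit_bmult: "odd (card {x \<in> bmult A b c. eps x}) \<longleftrightarrow> eps b \<and> eps c"
  using bialgebra_laws by simp

lemma counit_iff: "eps b \<longleftrightarrow> b = unitA"
proof
  show "eps b \<Longrightarrow> b = unitA" using deg_counit deg_eq_0_iff by blast
  have "\<exists>x. eps x"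
  proof (rule ccontr)
    assume "\<nexists>x. eps x"
    then have "zsum (\<lambda>(x, y). if eps x then {y} else {}) (bdiag A unitA) = {}"
      unfolding zsum_def by (auto simp: split_def)
    then show False using bdiag_counit_left[of unitA] by simp
  qed
  then show "b = unitA \<Longrightarrow> eps b" by (metis deg_counit deg_eq_0_iff)
qed

lemma unit_notin_bd: "unitA \<notin> bd A b"
proof
  assume "unitA \<in> bd A b"
  then have "{x \<in> bd A b. eps x} = {unitA}" using counit_iff by auto
  then show False using even_counit_bd[of b] by simp
qed

(* Each set-valued operation \<open>F\<close> of the statement gets a linear counterpart, with
   \<open>vec (F \<dots>) = F_v (vec \<dots>)\<close>; all computations happen on the vector side. *)
definition dA :: "'b \<Rightarrow> 'b zvec" where "dA b = vec (bd A b)"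
definition Delta :: "'b \<Rightarrow> ('b \<times> 'b) zvec" where "Delta b = vec (bdiag A b)"
definition mu :: "'b \<Rightarrow> 'b \<Rightarrow> 'b zvec" where "mu b c = vec (bmult A b c)"

lemma supp_dA[simp]: "supp (dA b) = bd A b" by (simp add: dA_def)
lemma supp_Delta[simp]: "supp (Delta b) = bdiag A b" by (simp add: Delta_def)
lemma supp_mu[simp]: "supp (mu b c) = bmult A b c" by (simp add: mu_def)

lemma vec_bd[simp]: "vec (bd A b) = dA b" by (simp add: dA_def)
lemma vec_bdiag[simp]: "vec (bdiag A b) = Delta b" by (simp add: Delta_def)
lemma vec_bmult[simp]: "vec (bmult A b c) = mu b c" by (simp add: mu_def)
lemma vec_single[simp]: "vec {x} = basis x" by (simp add: basis_def)

lemma mu_unit[simp]: "mu unitA b = basis b" "mu b unitA = basis b"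
  unfolding mu_def by (simp_all add: bmult_unit)

lemma vec_zsum_lin_ext: "finite S \<Longrightarrow> (\<And>s. s \<in> S \<Longrightarrow> finite (f s)) \<Longrightarrow> vec (zsum f S) = lin_ext (\<lambda>s. vec (f s)) (vec S)"
  by (simp add: vec_zsum lin_ext_vec)

lemma Delta_coassoc:
  "lin_ext (\<lambda>(x, y). lin_ext (\<lambda>(u, v). (f u v y :: 'y zvec)) (Delta x)) (Delta b) = lin_ext (\<lambda>(x, y). lin_ext (\<lambda>(u, v). f x u v) (Delta y)) (Delta b)"
proof -
  have "vec (zsum (\<lambda>(x, y). zsum (\<lambda>(u, v). {(u, v, y)}) (bdiag A x)) (bdiag A b))
      = vec (zsum (\<lambda>(x, y). zsum (\<lambda>(u, v). {(x, u, v)}) (bdiag A y)) (bdiag A b))"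
    by (simp only: bdiag_coassoc)
  hence "lin_ext (\<lambda>(x, y). lin_ext (\<lambda>(u, v). basis (u, v, y)) (Delta x)) (Delta b) = lin_ext (\<lambda>(x, y). lin_ext (\<lambda>(u, v). basis (x, u, v)) (Delta y)) (Delta b)"
    by (simp add: vec_zsum_lin_ext split_def finite_zsum)
  hence "lin_ext (\<lambda>(u, v, y). f u v y) (lin_ext (\<lambda>(x, y). lin_ext (\<lambda>(u, v). basis (u, v, y)) (Delta x)) (Delta b))
       = lin_ext (\<lambda>(u, v, y). f u v y) (lin_ext (\<lambda>(x, y). lin_ext (\<lambda>(u, v). basis (x, u, v)) (Delta y)) (Delta b))" by simp
  thus ?thesis by (simp add: lin_ext_lin_ext split_def)
qed

lemma Delta_counit_left: "lin_ext (\<lambda>(x, y). if eps x then f y else 0) (Delta b) = (f b :: 'y zvec)"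
proof -
  have "vec (zsum (\<lambda>(x, y). if eps x then {y} else {}) (bdiag A b)) = vec {b}"
    by (simp only: bdiag_counit_left)
  hence "lin_ext (\<lambda>(x, y). if eps x then basis y else 0) (Delta b) = basis b"
    by (simp add: vec_zsum_lin_ext split_def if_distrib cong: if_cong)
  hence "lin_ext f (lin_ext (\<lambda>(x, y). if eps x then basis y else 0) (Delta b)) = f b" by simp
  thus ?thesis by (simp add: lin_ext_lin_ext split_def if_distrib cong: if_cong)
qed

lemma Delta_counit_right: "lin_ext (\<lambda>(x, y). if eps y then f x else 0) (Delta b) = (f b :: 'y zvec)"
proof -
  have "vec (zsum (\<lambda>(x, y). if eps y then {x} else {}) (bdiag A b)) = vec {b}"
    by (simp only: bdiag_counit_right)
  hence "lin_ext (\<lambda>(x, y). if eps y then basis x else 0) (Delta b) = basis b"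
    by (simp add: vec_zsum_lin_ext split_def if_distrib cong: if_cong)
  hence "lin_ext f (lin_ext (\<lambda>(x, y). if eps y then basis x else 0) (Delta b)) = f b" by simp
  thus ?thesis by (simp add: lin_ext_lin_ext split_def if_distrib cong: if_cong)
qed

lemma Delta_unit: "Delta unitA = basis (unitA, unitA)"
proof -
  have sub: "bdiag A unitA \<subseteq> {(unitA, unitA)}"
  proof
    fix p assume "p \<in> bdiag A unitA"
    then obtain x y where p: "p = (x, y)" "(x, y) \<in> bdiag A unitA" by (cases p) auto
    hence "deg x + deg y = 0" using deg_bdiag[of x y unitA] deg_eq_0_iff[of unitA] by simp
    thus "p \<in> {(unitA, unitA)}" using p deg_eq_0_iff by auto
  qed
  have "bdiag A unitA \<noteq> {}"
  proof
    assume "bdiag A unitA = {}"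
    thus False using bdiag_counit_left[of unitA] by simp
  qed
  hence "bdiag A unitA = {(unitA, unitA)}" using sub by blast
  thus ?thesis using vec_bdiag[of unitA] by simp
qed

lemma Delta_dA:
  "lin_ext (\<lambda>c. lin_ext (f :: _ \<Rightarrow> 'y zvec) (Delta c)) (dA b)
   = lin_ext (\<lambda>(x, y). lin_ext (\<lambda>u. f (u, y)) (dA x) + lin_ext (\<lambda>v. f (x, v)) (dA y)) (Delta b)"
proof -
  have "vec (zsum (bdiag A) (bd A b))
      = vec (zsum (\<lambda>(x, y). zadd (zsum (\<lambda>u. {(u, y)}) (bd A x)) (zsum (\<lambda>v. {(x, v)}) (bd A y))) (bdiag A b))"
    by (simp only: bdiag_bd)
  hence "lin_ext Delta (dA b) = lin_ext (\<lambda>(x, y). lin_ext (\<lambda>u. basis (u, y)) (dA x) + lin_ext (\<lambda>v. basis (x, v)) (dA y)) (Delta b)"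
    by (simp add: vec_zsum_lin_ext split_def finite_zsum vec_zadd)
  hence "lin_ext f (lin_ext Delta (dA b)) = lin_ext f (lin_ext (\<lambda>(x, y). lin_ext (\<lambda>u. basis (u, y)) (dA x) + lin_ext (\<lambda>v. basis (x, v)) (dA y)) (Delta b))"
    by simp
  thus ?thesis by (simp add: lin_ext_lin_ext split_def)
qed

lemma mu_assoc:
  "lin_ext (\<lambda>x. lin_ext (f :: _ \<Rightarrow> 'y zvec) (mu x g)) (mu b c) = lin_ext (\<lambda>x. lin_ext f (mu b x)) (mu c g)"
proof -
  have "vec (zsum (\<lambda>x. bmult A x g) (bmult A b c)) = vec (zsum (\<lambda>x. bmult A b x) (bmult A c g))"
    by (simp only: bmult_assoc)
  hence "lin_ext (\<lambda>x. mu x g) (mu b c) = lin_ext (\<lambda>x. mu b x) (mu c g)"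
    by (simp add: vec_zsum_lin_ext)
  hence "lin_ext f (lin_ext (\<lambda>x. mu x g) (mu b c)) = lin_ext f (lin_ext (\<lambda>x. mu b x) (mu c g))" by simp
  thus ?thesis by (simp add: lin_ext_lin_ext)
qed

lemma dA_mu:
  "lin_ext (\<lambda>x. lin_ext (f :: _ \<Rightarrow> 'y zvec) (dA x)) (mu b c)
   = lin_ext (\<lambda>x. lin_ext f (mu x c)) (dA b) + lin_ext (\<lambda>x. lin_ext f (mu b x)) (dA c)"
proof -
  have "vec (zsum (bd A) (bmult A b c))
      = vec (zadd (zsum (\<lambda>x. bmult A x c) (bd A b)) (zsum (\<lambda>x. bmult A b x) (bd A c)))"
    by (simp only: bd_bmult)
  hence "lin_ext dA (mu b c) = lin_ext (\<lambda>x. mu x c) (dA b) + lin_ext (\<lambda>x. mu b x) (dA c)"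
    by (simp add: vec_zsum_lin_ext vec_zadd finite_zsum)
  hence "lin_ext f (lin_ext dA (mu b c)) = lin_ext f (lin_ext (\<lambda>x. mu x c) (dA b) + lin_ext (\<lambda>x. mu b x) (dA c))" by simp
  thus ?thesis by (simp add: lin_ext_lin_ext)
qed

lemma lin_ext_vec_Times: "finite S \<Longrightarrow> finite T \<Longrightarrow> lin_ext h (vec (S \<times> T)) = lin_ext (\<lambda>p. lin_ext (\<lambda>q. h (p, q)) (vec T)) (vec S)"
  by (simp add: lin_ext_vec sum.cartesian_product)

lemma Delta_mu:
  "lin_ext (\<lambda>e. lin_ext (f :: _ \<Rightarrow> 'y zvec) (Delta e)) (mu b c)
   = lin_ext (\<lambda>(x1, y1). lin_ext (\<lambda>(x2, y2). lin_ext (\<lambda>u. lin_ext (\<lambda>v. f (u, v)) (mu y1 y2)) (mu x1 x2)) (Delta c)) (Delta b)"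
proof -
  have "lin_ext Delta (mu b c) = lin_ext (\<lambda>(x1, y1). lin_ext (\<lambda>(x2, y2). lin_ext (\<lambda>u. lin_ext (\<lambda>v. basis (u, v)) (mu y1 y2)) (mu x1 x2)) (Delta c)) (Delta b)"
    using arg_cong[OF bdiag_bmult[of b c], of vec]
    by (simp add: vec_zsum_lin_ext finite_zsum lin_ext_vec_Times split_def)
  hence "lin_ext f (lin_ext Delta (mu b c)) = lin_ext f (lin_ext (\<lambda>(x1, y1). lin_ext (\<lambda>(x2, y2). lin_ext (\<lambda>u. lin_ext (\<lambda>v. basis (u, v)) (mu y1 y2)) (mu x1 x2)) (Delta c)) (Delta b))"
    by simp
  thus ?thesis by (simp add: lin_ext_lin_ext split_def)
qed

lemma counit_mu: "lin_ext (\<lambda>x. if eps x then F else 0) (mu b c) = (if eps b \<and> eps c then F else 0)"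
proof -
  have "lin_ext (\<lambda>x. if eps x then F else 0) (mu b c) = (\<Sum>x\<in>bmult A b c. if x = unitA then F else 0)"
    by (simp add: lin_ext_def counit_iff)
  also have "\<dots> = (if unitA \<in> bmult A b c then F else 0)"
    by (simp add: sum.delta)
  also have "unitA \<in> bmult A b c \<longleftrightarrow> eps b \<and> eps c"
  proof -
    have "{x \<in> bmult A b c. eps x} = (if unitA \<in> bmult A b c then {unitA} else {})"
      using counit_iff by auto
    thus ?thesis using odd_counit_bmult[of b c] by (auto split: if_splits)
  qed
  finally show ?thesis .
qed

section \<open>Iterated diagonal and the diamond operation\<close>

definition diag_iter_v :: "nat \<Rightarrow> 'b \<Rightarrow> 'b list zvec" where "diag_iter_v n b = vec (diag_iter A n b)"

lemma diag_iter_cases: obtains "n = 0" | "n = Suc 0" | m where "n = Suc (Suc m)"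
  by (metis not0_implies_Suc)

lemma finite_diag_iter[simp]: "finite (diag_iter A n b)"
proof (induction n arbitrary: b rule: less_induct)
  case (less n)
  show ?case
  proof (cases n rule: diag_iter_cases)
    case (3 m)
    thus ?thesis using less[of "Suc m"] by (auto intro!: finite_zsum)
  qed auto
qed

lemma length_diag_iter: "cs \<in> diag_iter A n b \<Longrightarrow> length cs = n"
proof (induction n arbitrary: b cs rule: less_induct)
  case (less n)
  show ?case
  proof (cases n rule: diag_iter_cases)
    case (3 m)
    from less.prems 3 have "cs \<in> zsum (\<lambda>(x, y). zsum (\<lambda>l. {l @ [y]}) (diag_iter A (Suc m) x)) (bdiag A b)"
      by simp
    from zsum_subset[THEN subsetD, OF this] obtain x y where
      "cs \<in> zsum (\<lambda>l. {l @ [y]}) (diag_iter A (Suc m) x)" by auto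
    from zsum_subset[THEN subsetD, OF this] obtain l where
      "l \<in> diag_iter A (Suc m) x" "cs = l @ [y]" by auto
    thus ?thesis using less.IH[of "Suc m"] 3 by simp
  qed (use less.prems in \<open>auto split: if_splits\<close>)
qed

lemma homog_diag_iter_v[simp]: "homog n (diag_iter_v n b)"
  unfolding homog_def diag_iter_v_def using length_diag_iter by simp

lemma diag_iter_v_0: "diag_iter_v 0 b = (if eps b then 1 else 0)"
  by (simp add: diag_iter_v_def basis_Nil[symmetric])
lemma diag_iter_v_1: "diag_iter_v (Suc 0) b = basis [b]"
  by (simp add: diag_iter_v_def)
lemma diag_iter_v_Suc_Suc: "diag_iter_v (Suc (Suc n)) b = lin_ext (\<lambda>(x, y). diag_iter_v (Suc n) x * basis [y]) (Delta b)"
proof -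
  have "diag_iter_v (Suc (Suc n)) b = vec (zsum (\<lambda>(x, y). zsum (\<lambda>l. {l @ [y]}) (diag_iter A (Suc n) x)) (bdiag A b))"
    by (simp add: diag_iter_v_def)
  also have "\<dots> = lin_ext (\<lambda>(x, y). lin_ext (\<lambda>l. basis (l @ [y])) (diag_iter_v (Suc n) x)) (Delta b)"
    by (simp add: vec_zsum_lin_ext finite_zsum split_def diag_iter_v_def)
  also have "\<dots> = lin_ext (\<lambda>(x, y). diag_iter_v (Suc n) x * basis [y]) (Delta b)"
    by (simp add: basis_append lin_ext_mult_right)
  finally show ?thesis .
qed

lemma diag_iter_v_Suc: "diag_iter_v (Suc n) b = lin_ext (\<lambda>(x, y). diag_iter_v n x * basis [y]) (Delta b)"
proof (cases n)
  case 0
  have "lin_ext (\<lambda>(x, y). diag_iter_v 0 x * basis [y]) (Delta b) = lin_ext (\<lambda>(x, y). if eps x then basis [y] else 0) (Delta b)"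
    by (simp add: diag_iter_v_0 split_def)
  also have "\<dots> = basis [b]" by (rule Delta_counit_left)
  finally show ?thesis using 0 by (simp add: diag_iter_v_1)
next
  case (Suc m) thus ?thesis by (simp add: diag_iter_v_Suc_Suc)
qed

lemma diag_iter_v_add: "diag_iter_v (m + n) b = lin_ext (\<lambda>(x, y). diag_iter_v m x * diag_iter_v n y) (Delta b)"
proof (induction n arbitrary: b)
  case 0
  have "lin_ext (\<lambda>(x, y). diag_iter_v m x * diag_iter_v 0 y) (Delta b) = lin_ext (\<lambda>(x, y). if eps y then diag_iter_v m x else 0) (Delta b)"
    by (simp add: diag_iter_v_0 split_def)
  also have "\<dots> = diag_iter_v m b" by (rule Delta_counit_right)
  finally show ?case by simp
next
  case (Suc k)
  have "diag_iter_v (m + Suc k) b = lin_ext (\<lambda>(x, y). diag_iter_v (m + k) x * basis [y]) (Delta b)"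
    by (simp only: add_Suc_right diag_iter_v_Suc)
  also have "\<dots> = lin_ext (\<lambda>(x, y). lin_ext (\<lambda>(u, v). diag_iter_v m u * diag_iter_v k v * basis [y]) (Delta x)) (Delta b)"
  proof (rule lin_ext_cong)
    fix p assume "p \<in> supp (Delta b)"
    obtain x y where p: "p = (x, y)" by (cases p)
    show "(case p of (x, y) \<Rightarrow> diag_iter_v (m + k) x * basis [y]) = (case p of (x, y) \<Rightarrow> lin_ext (\<lambda>(u, v). diag_iter_v m u * diag_iter_v k v * basis [y]) (Delta x))"
      unfolding p by (simp only: prod.case Suc.IH mult_lin_ext_left split_def)
  qed
  also have "\<dots> = lin_ext (\<lambda>(x, y). lin_ext (\<lambda>(u, v). diag_iter_v m x * diag_iter_v k u * basis [v]) (Delta y)) (Delta b)"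
    by (rule Delta_coassoc)
  also have "\<dots> = lin_ext (\<lambda>(x, y). diag_iter_v m x * diag_iter_v (Suc k) y) (Delta b)"
  proof (rule lin_ext_cong)
    fix p assume "p \<in> supp (Delta b)"
    obtain x y where p: "p = (x, y)" by (cases p)
    show "(case p of (x, y) \<Rightarrow> lin_ext (\<lambda>(u, v). diag_iter_v m x * diag_iter_v k u * basis [v]) (Delta y)) = (case p of (x, y) \<Rightarrow> diag_iter_v m x * diag_iter_v (Suc k) y)"
      unfolding p by (simp add: diag_iter_v_Suc[of k y] mult_lin_ext_right split_def mult.assoc)
  qed
  finally show ?case .
qed

lemma diag_iter_v_unit: "diag_iter_v n unitA = basis (replicate n unitA)"
proof (induction n)
  case 0 thus ?case by (simp add: diag_iter_v_0 counit_iff basis_Nil)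
next
  case (Suc n)
  have "diag_iter_v (Suc n) unitA = diag_iter_v n unitA * basis [unitA]" by (simp add: diag_iter_v_Suc Delta_unit)
  thus ?case using Suc by (simp add: basis_append[symmetric] replicate_append_same)
qed

definition zipmult_word :: "'b list \<Rightarrow> 'b list \<Rightarrow> 'b list zvec" where
  "zipmult_word cs w = (if length cs = length w then prod_list (map2 (\<lambda>c b. susp (mu c b)) cs w) else 0)"

lemma zipmult_word_Nil[simp]: "zipmult_word [] [] = 1" by (simp add: zipmult_word_def)
lemma zipmult_word_Cons[simp]: "zipmult_word (c # cs) (b # w) = susp (mu c b) * zipmult_word cs w" by (simp add: zipmult_word_def)
lemma zipmult_word_Nil_Cons[simp]: "zipmult_word [] (b # w) = 0" "zipmult_word (c # cs) [] = 0" by (simp_all add: zipmult_word_def)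
lemma zipmult_word_length_neq: "length cs \<noteq> length w \<Longrightarrow> zipmult_word cs w = 0" by (simp add: zipmult_word_def)

lemma zipmult_word_append: "length u1 = length w1 \<Longrightarrow> zipmult_word (u1 @ u2) (w1 @ w2) = zipmult_word u1 w1 * zipmult_word u2 w2"
proof (induction u1 arbitrary: w1)
  case Nil thus ?case by simp
next
  case (Cons c u1)
  then obtain b w1' where "w1 = b # w1'" "length u1 = length w1'" by (cases w1) auto
  thus ?case using Cons.IH by (simp add: mult.assoc)
qed

lemma homog_zipmult_word[simp]: "homog (length w) (zipmult_word cs w)"
proof (induction w arbitrary: cs)
  case Nil thus ?case by (cases cs) (auto simp: zipmult_word_def)
next
  case (Cons b w)
  thus ?case
  proof (cases cs)
    case (Cons c cs')
    thus ?thesis using homog_mult[OF homog_susp Cons.IH[of cs']] by simp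
  qed simp
qed

lemma vec_listset_map2: "length cs = length w \<Longrightarrow> vec (listset (map2 (bmult A) cs w)) = zipmult_word cs w"
proof -
  assume l: "length cs = length w"
  have "vec (listset (map2 (bmult A) cs w)) = prod_list (map (\<lambda>B. susp (vec B)) (map2 (bmult A) cs w))"
    by (rule vec_listset) (auto dest: set_zip_leftD set_zip_rightD)
  also have "\<dots> = zipmult_word cs w" using l by (simp add: zipmult_word_def o_def split_def)
  finally show ?thesis .
qed

definition zipmult :: "'b list zvec \<Rightarrow> 'b list zvec \<Rightarrow> 'b list zvec" where
  "zipmult U W = lin_ext (\<lambda>u. lin_ext (\<lambda>w. zipmult_word u w) W) U"

lemma zipmult_basis[simp]: "zipmult (basis u) (basis w) = zipmult_word u w" by (simp add: zipmult_def)
lemma zipmult_lin_ext_left: "zipmult (lin_ext f X) W = lin_ext (\<lambda>x. zipmult (f x) W) X"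
  by (simp add: zipmult_def lin_ext_lin_ext)
lemma zipmult_lin_ext_right: "zipmult U (lin_ext f X) = lin_ext (\<lambda>x. zipmult U (f x)) X"
  unfolding zipmult_def by (simp add: lin_ext_lin_ext lin_ext_swap[of _ X])
lemma zipmult_add_left[simp]: "zipmult (U + V) W = zipmult U W + zipmult V W" by (simp add: zipmult_def)
lemma zipmult_add_right[simp]: "zipmult U (V + W) = zipmult U V + zipmult U W" by (simp add: zipmult_def lin_ext_fadd)
lemma zipmult_zero[simp]: "zipmult 0 W = 0" "zipmult U 0 = 0" by (simp_all add: zipmult_def)
lemma zipmult_basis_right: "zipmult U (basis w) = lin_ext (\<lambda>u. zipmult_word u w) U" by (simp add: zipmult_def)
lemma zipmult_mismatch: "homog n X \<Longrightarrow> homog k Y \<Longrightarrow> n \<noteq> k \<Longrightarrow> zipmult X Y = 0"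
  unfolding zipmult_def
  by (rule trans[OF lin_ext_cong lin_ext_fzero], rule trans[OF lin_ext_cong lin_ext_fzero]) (auto simp: zipmult_word_length_neq homog_def)

lemma homog_zipmult: "homog n W \<Longrightarrow> homog n (zipmult U W)"
  unfolding zipmult_def by (intro homog_lin_ext) (metis homog_zipmult_word homog_def)

lemma mult_expand_left: "(X::'a::monoid_mult zvec) * Y = lin_ext (\<lambda>x. basis x * Y) X"
  by (metis lin_ext_basis_id mult_lin_ext_left)
lemma mult_expand_right: "(X::'a::monoid_mult zvec) * Y = lin_ext (\<lambda>y. X * basis y) Y"
  by (metis lin_ext_basis_id mult_lin_ext_right)
lemma zipmult_expand_left: "zipmult X Y = lin_ext (\<lambda>x. zipmult (basis x) Y) X"
  by (metis lin_ext_basis_id zipmult_lin_ext_left)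
lemma zipmult_expand_right: "zipmult X Y = lin_ext (\<lambda>y. zipmult X (basis y)) Y"
  by (metis lin_ext_basis_id zipmult_lin_ext_right)

lemma zipmult_mult:
  assumes "homog m U1" and "homog m W1"
  shows "zipmult (U1 * U2) (W1 * W2) = zipmult U1 W1 * zipmult U2 W2"
proof -
  have "zipmult (U1 * U2) (W1 * W2)
      = lin_ext (\<lambda>u1. lin_ext (\<lambda>u2. lin_ext (\<lambda>w1. lin_ext (\<lambda>w2. zipmult_word (u1 @ u2) (w1 @ w2)) W2) W1) U2) U1"
    by (simp add: times_zvec_def zipmult_def lin_ext_lin_ext times_list_def)
  also have "\<dots> = lin_ext (\<lambda>u1. lin_ext (\<lambda>u2. lin_ext (\<lambda>w1. lin_ext (\<lambda>w2.
                      zipmult_word u1 w1 * zipmult_word u2 w2) W2) W1) U2) U1"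
    using assms by (intro lin_ext_cong) (simp add: homog_def zipmult_word_append)
  also have "\<dots> = lin_ext (\<lambda>u1. lin_ext (\<lambda>w1. lin_ext (\<lambda>u2. lin_ext (\<lambda>w2.
                      zipmult_word u1 w1 * zipmult_word u2 w2) W2) U2) W1) U1"
    by (rule lin_ext_cong) (rule lin_ext_swap)
  also have "\<dots> = zipmult U1 W1 * zipmult U2 W2"
    by (simp only: zipmult_def mult_lin_ext_left) (simp only: mult_lin_ext_right)
  finally show ?thesis .
qed

lemma zipmult_susp_letter: "zipmult (susp X) (basis [c]) = lin_ext (\<lambda>x. susp (mu x c)) X"
  by (simp add: susp_def zipmult_lin_ext_left)
lemma zipmult_letter_susp: "zipmult (basis [a]) (susp Y) = lin_ext (\<lambda>y. susp (mu a y)) Y"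
  by (simp add: susp_def zipmult_lin_ext_right)

lemma susp_mu_assoc: "lin_ext (\<lambda>x. susp (mu x c)) (mu a b) = lin_ext (\<lambda>y. susp (mu a y)) (mu b c)"
  unfolding susp_def by (rule mu_assoc)

lemma zipmult_assoc_basis: "zipmult (zipmult_word u v) (basis w) = zipmult (basis u) (zipmult_word v w)"
proof (cases "length u = length v \<and> length v = length w")
  case True
  then have "length u = length v" "length v = length w" by simp_all
  then show ?thesis
  proof (induction u v w rule: list_induct3)
    case Nil
    then show ?case by (simp add: basis_Nil[symmetric])
  next
    case (Cons a u b v c w)
    have "zipmult (zipmult_word (a # u) (b # v)) (basis (c # w))
        = zipmult (susp (mu a b) * zipmult_word u v) (basis [c] * basis w)"
      by (simp add: basis_Cons[of c w])
    also have "\<dots> = zipmult (susp (mu a b)) (basis [c]) * zipmult (zipmult_word u v) (basis w)"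
      by (rule zipmult_mult[of "Suc 0"]) auto
    also have "\<dots> = zipmult (basis [a]) (susp (mu b c)) * zipmult (basis u) (zipmult_word v w)"
      by (simp add: zipmult_susp_letter zipmult_letter_susp susp_mu_assoc Cons.IH)
    also have "\<dots> = zipmult (basis [a] * basis u) (susp (mu b c) * zipmult_word v w)"
      by (rule zipmult_mult[of "Suc 0", symmetric]) auto
    also have "\<dots> = zipmult (basis (a # u)) (zipmult_word (b # v) (c # w))"
      by (simp add: basis_Cons[of a u])
    finally show ?case .
  qed
next
  case False
  have "zipmult (zipmult_word u v) (basis w) = 0"
    using False by (cases "length u = length v")
      (auto simp: zipmult_word_length_neq intro: zipmult_mismatch[OF homog_zipmult_word])
  moreover have "zipmult (basis u) (zipmult_word v w) = 0"
    using False by (cases "length v = length w")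
      (auto simp: zipmult_word_length_neq intro: zipmult_mismatch[OF _ homog_zipmult_word])
  ultimately show ?thesis by simp
qed

lemma zipmult_assoc: "zipmult (zipmult U V) W = zipmult U (zipmult V W)"
proof -
  have "zipmult (zipmult U V) W = lin_ext (\<lambda>u. zipmult (zipmult (basis u) V) W) U"
    by (simp only: zipmult_expand_left[of U V] zipmult_lin_ext_left)
  also have "\<dots> = lin_ext (\<lambda>u. zipmult (basis u) (zipmult V W)) U"
  proof (rule lin_ext_cong)
    fix u
    have "zipmult (zipmult (basis u) V) W = lin_ext (\<lambda>v. zipmult (zipmult (basis u) (basis v)) W) V"
      by (simp only: zipmult_expand_right[of "basis u" V] zipmult_lin_ext_left)
    also have "\<dots> = lin_ext (\<lambda>v. zipmult (basis u) (zipmult (basis v) W)) V"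
    proof (rule lin_ext_cong)
      fix v
      have "zipmult (zipmult (basis u) (basis v)) W = lin_ext (\<lambda>w. zipmult (zipmult_word u v) (basis w)) W"
        by (simp only: zipmult_basis zipmult_expand_right[of "zipmult_word u v" W])
      also have "\<dots> = lin_ext (\<lambda>w. zipmult (basis u) (zipmult (basis v) (basis w))) W"
        by (simp add: zipmult_assoc_basis)
      also have "\<dots> = zipmult (basis u) (zipmult (basis v) W)"
        by (simp only: zipmult_expand_right[of "basis v" W] zipmult_lin_ext_right)
      finally show "zipmult (zipmult (basis u) (basis v)) W = zipmult (basis u) (zipmult (basis v) W)" .
    qed
    also have "\<dots> = zipmult (basis u) (zipmult V W)"
      by (simp only: zipmult_expand_left[of V W] zipmult_lin_ext_right)
    finally show "zipmult (zipmult (basis u) V) W = zipmult (basis u) (zipmult V W)" .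
  qed
  also have "\<dots> = zipmult U (zipmult V W)"
    by (simp only: zipmult_expand_left[of U "zipmult V W", symmetric])
  finally show ?thesis .
qed

lemma diag_iter_v_zipmult: "zipmult (diag_iter_v n x) (diag_iter_v n b) = lin_ext (diag_iter_v n) (mu x b)"
proof (induction n arbitrary: x b)
  case 0
  show ?case by (simp add: diag_iter_v_0 counit_mu basis_Nil[symmetric])
next
  case (Suc n)
  have "zipmult (diag_iter_v (Suc n) x) (diag_iter_v (Suc n) b)
      = lin_ext (\<lambda>q. lin_ext (\<lambda>p. zipmult (diag_iter_v n (fst p) * basis [snd p]) (diag_iter_v n (fst q) * basis [snd q])) (Delta x)) (Delta b)"
    by (simp add: diag_iter_v_Suc zipmult_lin_ext_left zipmult_lin_ext_right split_def)
  also have "\<dots> = lin_ext (\<lambda>p. lin_ext (\<lambda>q. zipmult (diag_iter_v n (fst p) * basis [snd p]) (diag_iter_v n (fst q) * basis [snd q])) (Delta b)) (Delta x)"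
    by (rule lin_ext_swap)
  also have "\<dots> = lin_ext (\<lambda>(x1, y1). lin_ext (\<lambda>(x2, y2). zipmult (diag_iter_v n x1 * basis [y1]) (diag_iter_v n x2 * basis [y2])) (Delta b)) (Delta x)"
    by (simp add: split_def)
  also have "\<dots> = lin_ext (\<lambda>(x1, y1). lin_ext (\<lambda>(x2, y2). lin_ext (diag_iter_v n) (mu x1 x2) * susp (mu y1 y2)) (Delta b)) (Delta x)"
    by (simp add: zipmult_mult[of n] Suc.IH split_def)
  also have "\<dots> = lin_ext (\<lambda>(x1, y1). lin_ext (\<lambda>(x2, y2). lin_ext (\<lambda>u. lin_ext (\<lambda>v. diag_iter_v n u * basis [v]) (mu y1 y2)) (mu x1 x2)) (Delta b)) (Delta x)"
    by (simp add: split_def lin_ext_mult_left lin_ext_mult_right susp_def)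
  also have "\<dots> = lin_ext (\<lambda>e. lin_ext (\<lambda>(p, q). diag_iter_v n p * basis [q]) (Delta e)) (mu x b)"
    using Delta_mu[of "\<lambda>(p, q). diag_iter_v n p * basis [q]" x b] by simp
  also have "\<dots> = lin_ext (diag_iter_v (Suc n)) (mu x b)"
    by (rule lin_ext_cong) (simp add: diag_iter_v_Suc)
  finally show ?case .
qed

lemma zipmult_word_replicate_unit: "length w = n \<Longrightarrow> zipmult_word (replicate n unitA) w = basis w"
proof (induction w arbitrary: n)
  case Nil thus ?case by (simp add: basis_Nil)
next
  case (Cons c w)
  thus ?case by (auto simp: basis_Cons[of c w] susp_basis)
qed

definition diamond_v :: "'b \<Rightarrow> 'b list \<Rightarrow> 'b list zvec" where
  "diamond_v a w = zipmult (diag_iter_v (length w) a) (basis w)"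

lemma finite_diamond[simp]: "finite (diamond A a w)"
  unfolding diamond_def by (intro finite_zsum finite_listset) (auto dest: set_zip_leftD set_zip_rightD)

lemma vec_diamond: "vec (diamond A a w) = diamond_v a w"
proof -
  have "vec (diamond A a w) = lin_ext (\<lambda>cs. vec (listset (map2 (bmult A) cs w))) (diag_iter_v (length w) a)"
    unfolding diamond_def diag_iter_v_def
    by (subst vec_zsum_lin_ext) (auto intro!: finite_listset dest: set_zip_leftD set_zip_rightD)
  also have "\<dots> = lin_ext (\<lambda>cs. zipmult_word cs w) (diag_iter_v (length w) a)"
    by (rule lin_ext_cong) (simp add: vec_listset_map2 diag_iter_v_def length_diag_iter)
  also have "\<dots> = diamond_v a w" by (simp add: diamond_v_def zipmult_basis_right)
  finally show ?thesis .
qed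

lemma homog_diamond_v[simp]: "homog (length w) (diamond_v a w)"
  unfolding diamond_v_def by (simp add: homog_zipmult)

definition dia :: "'b \<Rightarrow> 'b list zvec \<Rightarrow> 'b list zvec" where "dia a Y = lin_ext (diamond_v a) Y"
definition dia_ext :: "'b zvec \<Rightarrow> 'b list zvec \<Rightarrow> 'b list zvec" where "dia_ext X Y = lin_ext (\<lambda>a. dia a Y) X"

lemma dia_basis[simp]: "dia a (basis w) = diamond_v a w" by (simp add: dia_def)
lemma dia_add[simp]: "dia a (X + Y) = dia a X + dia a Y" by (simp add: dia_def)
lemma dia_zero[simp]: "dia a 0 = 0" by (simp add: dia_def)
lemma dia_lin_ext: "dia a (lin_ext f X) = lin_ext (\<lambda>x. dia a (f x)) X" by (simp add: dia_def lin_ext_lin_ext)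
lemma dia_ext_basis[simp]: "dia_ext (basis a) Y = dia a Y" by (simp add: dia_ext_def)
lemma dia_ext_add_left[simp]: "dia_ext (X + X') Y = dia_ext X Y + dia_ext X' Y" by (simp add: dia_ext_def)
lemma dia_ext_add_right[simp]: "dia_ext X (Y + Y') = dia_ext X Y + dia_ext X Y'" by (simp add: dia_ext_def lin_ext_fadd)
lemma dia_ext_zero[simp]: "dia_ext 0 Y = 0" "dia_ext X 0 = 0" by (simp_all add: dia_ext_def)
lemma dia_ext_lin_ext_right: "dia_ext X (lin_ext f Y) = lin_ext (\<lambda>y. dia_ext X (f y)) Y"
  by (simp add: dia_ext_def dia_lin_ext lin_ext_swap[of _ Y])
lemma dia_eq_zipmult: "homog n Y \<Longrightarrow> dia a Y = zipmult (diag_iter_v n a) Y"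
proof -
  assume h: "homog n Y"
  have "dia a Y = lin_ext (\<lambda>y. zipmult (diag_iter_v n a) (basis y)) Y"
    unfolding dia_def diamond_v_def by (rule lin_ext_cong) (use h in \<open>simp add: homog_def\<close>)
  also have "\<dots> = zipmult (diag_iter_v n a) Y" by (simp only: zipmult_expand_right[of _ Y, symmetric])
  finally show ?thesis .
qed

lemma dia_one: "dia a 1 = (if eps a then 1 else 0)"
  by (simp add: basis_Nil[symmetric] diamond_v_def diag_iter_v_0)

lemma dia_letter: "dia a (basis [b]) = susp (mu a b)"
  by (simp add: diamond_v_def diag_iter_v_1)

lemma dia_unit: "dia unitA Y = Y"
proof -
  have "dia unitA Y = lin_ext basis Y"
    unfolding dia_def diamond_v_def
    by (rule lin_ext_cong) (simp add: diag_iter_v_unit zipmult_word_replicate_unit)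
  thus ?thesis by simp
qed

lemma diamond_v_append: "diamond_v a (v @ w) = lin_ext (\<lambda>(x, y). diamond_v x v * diamond_v y w) (Delta a)"
proof -
  have "diamond_v a (v @ w) = zipmult (lin_ext (\<lambda>(x, y). diag_iter_v (length v) x * diag_iter_v (length w) y) (Delta a)) (basis v * basis w)"
    by (simp add: diamond_v_def diag_iter_v_add basis_append)
  also have "\<dots> = lin_ext (\<lambda>(x, y). zipmult (diag_iter_v (length v) x * diag_iter_v (length w) y) (basis v * basis w)) (Delta a)"
    by (simp add: zipmult_lin_ext_left split_def)
  also have "\<dots> = lin_ext (\<lambda>(x, y). diamond_v x v * diamond_v y w) (Delta a)"
    by (simp add: zipmult_mult[of "length v"] diamond_v_def split_def)
  finally show ?thesis .
qed

lemma dia_mult: "dia a (Y1 * Y2) = lin_ext (\<lambda>(x, y). dia x Y1 * dia y Y2) (Delta a)"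
proof -
  have "dia a (Y1 * Y2) = lin_ext (\<lambda>v. lin_ext (\<lambda>w. diamond_v a (v @ w)) Y2) Y1"
    by (simp add: times_zvec_def dia_lin_ext times_list_def)
  also have "\<dots> = lin_ext (\<lambda>v. lin_ext (\<lambda>w. lin_ext (\<lambda>p. diamond_v (fst p) v * diamond_v (snd p) w) (Delta a)) Y2) Y1"
    by (simp add: diamond_v_append split_def)
  also have "\<dots> = lin_ext (\<lambda>p. lin_ext (\<lambda>v. lin_ext (\<lambda>w. diamond_v (fst p) v * diamond_v (snd p) w) Y2) Y1) (Delta a)"
    by (simp add: lin_ext_swap[of _ "Delta a"])
  also have "\<dots> = lin_ext (\<lambda>(x, y). dia x Y1 * dia y Y2) (Delta a)"
    by (rule lin_ext_cong) (simp only: dia_def split_def mult_lin_ext_left, simp only: mult_lin_ext_right)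
  finally show ?thesis .
qed

lemma dia_assoc: "dia x (dia b Z) = dia_ext (mu x b) Z"
proof -
  have "dia x (dia b Z) = lin_ext (\<lambda>z. dia x (diamond_v b z)) Z" by (simp add: dia_def lin_ext_lin_ext)
  also have "\<dots> = lin_ext (\<lambda>z. lin_ext (\<lambda>e. diamond_v e z) (mu x b)) Z"
  proof (rule lin_ext_cong)
    fix z :: "'b list"
    let ?n = "length z"
    have "dia x (diamond_v b z) = zipmult (diag_iter_v ?n x) (diamond_v b z)"
      by (rule dia_eq_zipmult) simp
    also have "\<dots> = zipmult (diag_iter_v ?n x) (zipmult (diag_iter_v ?n b) (basis z))"
      by (simp add: diamond_v_def)
    also have "\<dots> = zipmult (lin_ext (diag_iter_v ?n) (mu x b)) (basis z)"
      by (simp add: zipmult_assoc[symmetric] diag_iter_v_zipmult)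
    also have "\<dots> = lin_ext (\<lambda>e. diamond_v e z) (mu x b)"
      by (simp add: zipmult_lin_ext_left diamond_v_def)
    finally show "dia x (diamond_v b z) = lin_ext (\<lambda>e. diamond_v e z) (mu x b)" .
  qed
  also have "\<dots> = dia_ext (mu x b) Z"
    by (simp add: dia_ext_def dia_def lin_ext_swap[of _ Z])
  finally show ?thesis .
qed

section \<open>The operations \<open>E\<^sub>1\<^sub>,\<^sub>k\<close>\<close>

definition E_term :: "'b list \<Rightarrow> 'b list list \<Rightarrow> nat list \<Rightarrow> 'b list zvec" where
  "E_term x ys is = prod_list (map (\<lambda>j. if j \<in> set is then diamond_v (x ! j) (ys ! card {i \<in> set is. i < j}) else basis [x ! j]) [0..<length x])"

definition E_word_v :: "'b list \<Rightarrow> 'b list list \<Rightarrow> 'b list zvec" where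
  "E_word_v x ys = (\<Sum>is\<in>incseqs (length ys) (length x). E_term x ys is)"

lemma prod_list_upt_Suc: "prod_list (map f [0..<Suc n]) = f 0 * prod_list (map (\<lambda>j. f (Suc j)) [0..<n])"
  by (simp add: upt_conv_Cons map_Suc_upt[symmetric] o_def del: upt_Suc)

lemma Suc_mem_image[simp]: "Suc j \<in> Suc ` S \<longleftrightarrow> j \<in> S" by auto

lemma card_shift: "card {i \<in> Suc ` set is. i < Suc j} = card {i \<in> set is. i < j}"
proof -
  have "{i \<in> Suc ` set is. i < Suc j} = Suc ` {i \<in> set is. i < j}" by auto
  thus ?thesis by (simp add: card_image)
qed

lemma card_shift_zero: "card {i \<in> insert 0 (Suc ` set is). i < Suc j} = Suc (card {i \<in> set is. i < j})"
proof -
  have "{i \<in> insert 0 (Suc ` set is). i < Suc j} = insert 0 (Suc ` {i \<in> set is. i < j})" by auto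
  thus ?thesis by (simp add: card_image)
qed

lemma E_term_Nil: "E_term x [] [] = basis x"
proof (induction x)
  case Nil thus ?case by (simp add: E_term_def basis_Nil)
next
  case (Cons a x)
  have "E_term (a # x) [] [] = basis [a] * E_term x [] []"
    by (simp add: E_term_def prod_list_upt_Suc del: upt_Suc)
  thus ?case using Cons by (simp add: basis_Cons[symmetric])
qed

lemma E_term_shift: "E_term (a # x) ys (map Suc is) = basis [a] * E_term x ys is"
  unfolding E_term_def by (simp add: prod_list_upt_Suc card_shift del: upt_Suc cong: if_cong)

lemma card_shift_zero': "card {i \<in> set (0 # map Suc is). i < Suc j} = Suc (card {i \<in> set is. i < j})"
  using card_shift_zero[of "is" j] by simp

lemma E_term_shift_zero: "E_term (a # x) (y # ys) (0 # map Suc is) = diamond_v a y * E_term x ys is"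
proof -
  have pw: "(if Suc j \<in> set (0 # map Suc is) then diamond_v ((a # x) ! Suc j) ((y # ys) ! card {i \<in> set (0 # map Suc is). i < Suc j}) else basis [(a # x) ! Suc j])
      = (if j \<in> set is then diamond_v (x ! j) (ys ! card {i \<in> set is. i < j}) else basis [x ! j])" for j
    unfolding card_shift_zero' by simp
  show ?thesis
    unfolding E_term_def prod_list_upt_Suc length_Cons pw by simp
qed

lemma E_word_v_no_args: "E_word_v x [] = basis x"
  by (simp add: E_word_v_def incseqs_Nil E_term_Nil)

lemma E_word_v_Nil_Cons: "E_word_v [] (y # ys) = 0"
  by (simp add: E_word_v_def incseqs_0)

lemma E_word_v_Cons: "E_word_v (a # x) ys = basis [a] * E_word_v x ys + (case ys of [] \<Rightarrow> 0 | y # ys' \<Rightarrow> diamond_v a y * E_word_v x ys')"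
proof -
  let ?k = "length ys" and ?n = "length x"
  have inj1: "inj_on (map Suc) (incseqs ?k ?n)" by (auto simp: inj_on_def)
  have inj2: "inj_on (\<lambda>is. 0 # map Suc is) S" for S :: "nat list set" by (auto simp: inj_on_def)
  have s1: "(\<Sum>is\<in>map Suc ` incseqs ?k ?n. E_term (a # x) ys is) = basis [a] * E_word_v x ys"
    by (simp add: sum.reindex[OF inj1] E_term_shift E_word_v_def sum_distrib_left)
  show ?thesis
  proof (cases ys)
    case Nil
    thus ?thesis by (simp add: E_word_v_no_args basis_Cons[of a x])
  next
    case (Cons y ys')
    have disj: "map Suc ` incseqs ?k ?n \<inter> (\<lambda>is. 0 # map Suc is) ` incseqs (length ys') ?n = {}" by auto
    have s2: "(\<Sum>is\<in>(\<lambda>is. 0 # map Suc is) ` incseqs (length ys') ?n. E_term (a # x) ys is) = diamond_v a y * E_word_v x ys'"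
      using Cons by (simp add: sum.reindex[OF inj2] E_term_shift_zero E_word_v_def sum_distrib_left)
    have "E_word_v (a # x) ys = (\<Sum>is\<in>map Suc ` incseqs ?k ?n \<union> (\<lambda>is. 0 # map Suc is) ` incseqs (length ys') ?n. E_term (a # x) ys is)"
      unfolding E_word_v_def using Cons by (simp add: incseqs_Suc)
    also have "\<dots> = basis [a] * E_word_v x ys + diamond_v a y * E_word_v x ys'"
      by (subst sum.union_disjoint) (use disj s1 s2 in auto)
    finally show ?thesis using Cons by simp
  qed
qed

lemma E_word_v_Nil: "E_word_v [] ys = (if ys = [] then 1 else 0)"
  by (cases ys) (simp_all add: E_word_v_no_args E_word_v_Nil_Cons basis_Nil)

lemma finite_E_word[simp]: "finite (E_word A x ys)"
  unfolding E_word_def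
  by (auto intro!: finite_zsum finite_listset simp: finite_diamond)

lemma vec_E_word: "vec (E_word A x ys) = E_word_v x ys"
proof (cases "ys = []")
  case True thus ?thesis by (simp add: E_word_def E_word_v_no_args)
next
  case False
  define F where "F = (\<lambda>is j. if j \<in> set is then diamond A (x ! j) (ys ! card {i \<in> set is. i < j}) else {[x ! j]})"
  have e: "E_word A x ys = zsum (\<lambda>is. zsum (\<lambda>cs. {concat cs}) (listset (map (F is) [0..<length x]))) (incseqs (length ys) (length x))"
    using False by (simp add: E_word_def F_def)
  have fF: "finite (F is j)" for "is" j by (simp add: F_def)
  have "vec (E_word A x ys) = (\<Sum>is\<in>incseqs (length ys) (length x). vec (zsum (\<lambda>cs. {concat cs}) (listset (map (F is) [0..<length x]))))"
    unfolding e by (rule vec_zsum) (auto intro!: finite_zsum finite_listset simp: fF)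
  also have "\<dots> = (\<Sum>is\<in>incseqs (length ys) (length x). prod_list (map (\<lambda>j. vec (F is j)) [0..<length x]))"
    by (rule sum.cong[OF refl], subst vec_concat_listset) (auto simp: fF o_def)
  also have "\<dots> = E_word_v x ys"
    unfolding E_word_v_def E_term_def F_def by (rule sum.cong[OF refl]) (simp add: vec_diamond if_distrib[of vec] cong: if_cong)
  finally show ?thesis .
qed

lemma E_word_v_append: "E_word_v (v @ w) ys = (\<Sum>p\<le>length ys. E_word_v v (take p ys) * E_word_v w (drop p ys))"
proof (induction v arbitrary: ys)
  case Nil
  show ?case
  proof (cases ys)
    case Nil thus ?thesis by (simp add: E_word_v_no_args basis_Nil)
  next
    case (Cons y ys')
    have "(\<Sum>p\<le>length ys. E_word_v [] (take p ys) * E_word_v w (drop p ys)) = E_word_v w ys"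
      using Cons by (simp add: sum.atMost_Suc_shift E_word_v_Nil del: sum.atMost_Suc)
    thus ?thesis by simp
  qed
next
  case (Cons a v)
  have e1: "E_word_v ((a # v) @ w) ys = basis [a] * E_word_v (v @ w) ys + (case ys of [] \<Rightarrow> 0 | y # ys' \<Rightarrow> diamond_v a y * E_word_v (v @ w) ys')"
    by (simp add: E_word_v_Cons)
  have e2: "(\<Sum>p\<le>length ys. E_word_v (a # v) (take p ys) * E_word_v w (drop p ys))
      = basis [a] * (\<Sum>p\<le>length ys. E_word_v v (take p ys) * E_word_v w (drop p ys))
        + (\<Sum>p\<le>length ys. (case take p ys of [] \<Rightarrow> 0 | y # ys' \<Rightarrow> diamond_v a y * E_word_v v ys') * E_word_v w (drop p ys))"
    by (simp add: E_word_v_Cons distrib_right sum.distrib sum_distrib_left mult.assoc)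
  show ?case
  proof (cases ys)
    case Nil thus ?thesis using e1 e2 Cons.IH by simp
  next
    case (Cons y ys')
    have "(\<Sum>p\<le>length ys. (case take p ys of [] \<Rightarrow> 0 | y # ys' \<Rightarrow> diamond_v a y * E_word_v v ys') * E_word_v w (drop p ys))
        = diamond_v a y * (\<Sum>p\<le>length ys'. E_word_v v (take p ys') * E_word_v w (drop p ys'))"
      using Cons by (simp add: sum.atMost_Suc_shift sum_distrib_left mult.assoc del: sum.atMost_Suc)
    thus ?thesis using e1 e2 Cons.IH Cons by simp
  qed
qed

definition E_v :: "'b list zvec \<Rightarrow> 'b list zvec list \<Rightarrow> 'b list zvec" where
  "E_v X Ys = lin_ext (\<lambda>x. mlin_ext (E_word_v x) Ys) X"

lemma vec_E: "finite X \<Longrightarrow> (\<And>Y. Y \<in> set Ys \<Longrightarrow> finite Y) \<Longrightarrow> vec (E A X Ys) = E_v (vec X) (map vec Ys)"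
  unfolding E_def E_v_def
  by (simp add: vec_zsum_lin_ext finite_zsum finite_listset vec_E_word lin_ext_vec sum_listset_mlin_ext)

lemma E_v_add[simp]: "E_v (X + Y) Ys = E_v X Ys + E_v Y Ys" by (simp add: E_v_def)
lemma E_v_zero[simp]: "E_v 0 Ys = 0" by (simp add: E_v_def)
lemma E_v_lin_ext: "E_v (lin_ext f X) Ys = lin_ext (\<lambda>x. E_v (f x) Ys) X" by (simp add: E_v_def lin_ext_lin_ext)
lemma E_v_basis: "E_v (basis x) Ys = mlin_ext (E_word_v x) Ys" by (simp add: E_v_def)
lemma E_v_Nil[simp]: "E_v X [] = X" by (simp add: E_v_def E_word_v_no_args)
lemma E_v_one: "E_v 1 Ys = (if Ys = [] then 1 else 0)"
proof (cases Ys)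
  case (Cons Y Ys')
  have "E_v (basis []) Ys = 0" using Cons
    by (simp add: E_v_def) (rule trans[OF lin_ext_cong lin_ext_fzero], simp add: E_word_v_Nil_Cons)
  thus ?thesis using Cons by (simp add: basis_Nil)
qed simp

lemma E_v_letter_single: "E_v (basis [a]) [Y] = dia a Y"
  by (simp add: E_v_def E_word_v_Cons E_word_v_Nil_Cons E_word_v_no_args basis_Nil dia_def)

lemma E_v_letter_many: "2 \<le> length Ys \<Longrightarrow> E_v (basis [a]) Ys = 0"
proof -
  assume "2 \<le> length Ys"
  then obtain Y1 Y2 Ys' where c: "Ys = Y1 # Y2 # Ys'" by (metis One_nat_def Suc_1 Suc_le_length_iff)
  have "E_word_v [a] (y1 # y2 # ys') = 0" for y1 y2 ys' by (simp add: E_word_v_Cons E_word_v_Nil_Cons)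
  thus ?thesis using c by (simp add: E_v_def)
qed

lemma E_v_mult: "E_v (X * Y) Ys = (\<Sum>p\<le>length Ys. E_v X (take p Ys) * E_v Y (drop p Ys))"
proof -
  have "E_v (X * Y) Ys = lin_ext (\<lambda>x. lin_ext (\<lambda>y. mlin_ext (E_word_v (x @ y)) Ys) Y) X"
    by (simp add: times_zvec_def E_v_lin_ext times_list_def E_v_basis)
  also have "\<dots> = lin_ext (\<lambda>x. lin_ext (\<lambda>y. (\<Sum>p\<le>length Ys. mlin_ext (E_word_v x) (take p Ys) * mlin_ext (E_word_v y) (drop p Ys))) Y) X"
  proof -
    have "mlin_ext (E_word_v (x @ y)) Ys = (\<Sum>p\<le>length Ys. mlin_ext (E_word_v x) (take p Ys) * mlin_ext (E_word_v y) (drop p Ys))" for x y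
    proof -
      have "mlin_ext (E_word_v (x @ y)) Ys = mlin_ext (\<lambda>ys. \<Sum>p\<le>length Ys. E_word_v x (take p ys) * E_word_v y (drop p ys)) Ys"
        by (rule mlin_ext_cong) (simp add: E_word_v_append)
      also have "\<dots> = (\<Sum>p\<le>length Ys. mlin_ext (E_word_v x) (take p Ys) * mlin_ext (E_word_v y) (drop p Ys))"
        by (simp add: mlin_ext_fsum mlin_ext_split)
      finally show ?thesis .
    qed
    thus ?thesis by simp
  qed
  also have "\<dots> = (\<Sum>p\<le>length Ys. E_v X (take p Ys) * E_v Y (drop p Ys))"
    by (simp add: E_v_def lin_ext_fsum lin_ext_mult_left lin_ext_mult_right)
  finally show ?thesis .
qed

lemma E_v_distrib:
  assumes "Ys \<noteq> []"
  shows "E_v (X1 * X2) Ys = X1 * E_v X2 Ys + E_v X1 Ys * X2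
           + (\<Sum>p\<in>{1..<length Ys}. E_v X1 (take p Ys) * E_v X2 (drop p Ys))"
proof -
  have "{..length Ys} = insert 0 (insert (length Ys) {1..<length Ys})" using assms by auto
  then show ?thesis using assms by (simp add: E_v_mult algebra_simps)
qed

lemma diamond_v_letter[simp]: "diamond_v a [b] = susp (mu a b)"
  using dia_letter[of a b] by simp

lemma E_v_letter_prod: "E_v (basis [a] * Q) Ws = (case Ws of [] \<Rightarrow> basis [a] * Q | W # Ws' \<Rightarrow> basis [a] * E_v Q Ws + dia a W * E_v Q Ws')"
proof (cases Ws)
  case Nil thus ?thesis by simp
next
  case (Cons W Ws')
  have z: "(\<Sum>p\<le>length Ws'. E_v (basis [a]) (W # take p Ws') * E_v Q (drop p Ws')) = dia a W * E_v Q Ws'"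
  proof (cases Ws')
    case Nil thus ?thesis by (simp add: E_v_letter_single)
  next
    case (Cons W2 Ws'')
    have "(\<Sum>p\<le>length Ws''. E_v (basis [a]) (W # take (Suc p) Ws') * E_v Q (drop (Suc p) Ws')) = 0"
      by (rule sum.neutral) (simp add: E_v_letter_many Cons)
    thus ?thesis using Cons by (simp add: sum.atMost_Suc_shift E_v_letter_single del: sum.atMost_Suc)
  qed
  show ?thesis using Cons
    by (simp add: E_v_mult sum.atMost_Suc_shift z del: sum.atMost_Suc)
qed

lemma E_v_susp_prod: "E_v (susp X * Q) Ws = lin_ext (\<lambda>c. E_v (basis [c] * Q) Ws) X"
  by (simp add: susp_def mult_lin_ext_left E_v_lin_ext)

lemma E_v_dia_basis: "E_v (dia a (basis y)) Ws = dia a (E_v (basis y) Ws)"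
proof (induction y arbitrary: a Ws)
  case Nil
  show ?case by (simp add: basis_Nil dia_one E_v_one)
next
  case (Cons b y)
  have IH': "\<And>z Ws. E_v (diamond_v z y) Ws = dia z (E_v (basis y) Ws)" using Cons.IH by simp
  have L: "dia a (basis (b # y)) = lin_ext (\<lambda>(x, z). susp (mu x b) * dia z (basis y)) (Delta a)"
    by (simp add: basis_Cons[of b y] dia_mult dia_letter)
  show ?case
  proof (cases Ws)
    case Nil thus ?thesis by simp
  next
    case (Cons W Ws')
    have "E_v (dia a (basis (b # y))) Ws
        = lin_ext (\<lambda>(x, z). lin_ext (\<lambda>c. basis [c] * E_v (dia z (basis y)) Ws + dia c W * E_v (dia z (basis y)) Ws') (mu x b)) (Delta a)"
      unfolding L by (simp add: E_v_lin_ext split_def E_v_susp_prod E_v_letter_prod Cons)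
    also have "\<dots> = lin_ext (\<lambda>(x, z). susp (mu x b) * dia z (E_v (basis y) Ws) + dia_ext (mu x b) W * dia z (E_v (basis y) Ws')) (Delta a)"
      by (simp add: lin_ext_fadd IH' split_def lin_ext_mult_right susp_def dia_ext_def)
    also have "\<dots> = lin_ext (\<lambda>(x, z). dia x (basis [b]) * dia z (E_v (basis y) Ws) + dia x (dia b W) * dia z (E_v (basis y) Ws')) (Delta a)"
      by (simp add: dia_letter dia_assoc)
    also have "\<dots> = dia a (basis [b] * E_v (basis y) Ws + dia b W * E_v (basis y) Ws')"
      by (simp add: dia_mult lin_ext_fadd split_def)
    also have "\<dots> = dia a (E_v (basis (b # y)) Ws)"
      by (simp add: basis_Cons[of b y] E_v_letter_prod Cons)
    finally show ?thesis .
  qed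
qed

lemma E_v_dia: "E_v (dia a Y) Ws = dia a (E_v Y Ws)"
proof -
  have "E_v (dia a (lin_ext basis Y)) Ws = dia a (E_v (lin_ext basis Y) Ws)"
    by (simp only: dia_lin_ext E_v_lin_ext E_v_dia_basis)
  thus ?thesis by simp
qed

section \<open>Higher pre-Jacobi identities\<close>

definition jac_args_v :: "'b list zvec list \<Rightarrow> 'b list zvec list \<Rightarrow> nat list \<Rightarrow> nat list \<Rightarrow> 'b list zvec list" where
  "jac_args_v Ys Zs is ns =
     concat (map (\<lambda>j. take (is ! j - jprev is ns j) (drop (jprev is ns j) Zs)
                      @ [E_v (Ys ! j) (take (ns ! j) (drop (is ! j) Zs))]) [0..<length Ys])
     @ drop (jprev is ns (length Ys)) Zs"

definition jac_sum :: "'b list zvec \<Rightarrow> 'b list zvec list \<Rightarrow> 'b list zvec list \<Rightarrow> 'b list zvec" where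
  "jac_sum X Ys Zs = (\<Sum>q\<in>jac_index (length Ys) (length Zs). E_v X (jac_args_v Ys Zs (fst q) (snd q)))"

lemma jac_args_v_Nil: "jac_args_v [] Zs is ns = Zs"
  by (simp add: jac_args_v_def)

lemma jac_sum_Nil: "jac_sum X [] Zs = E_v X Zs"
  by (simp add: jac_sum_def jac_index_0 jac_args_v_Nil)

lemma jac_args_v_ne: "Ys \<noteq> [] \<Longrightarrow> jac_args_v Ys Zs is ns \<noteq> []"
  by (cases Ys) (simp_all add: jac_args_v_def upt_conv_Cons del: upt_Suc)

lemma jac_args_v_shift:
  assumes "length Ys = m" "0 < m" "length is = m"
  shows "jac_args_v Ys (Z # Zs) (map Suc is) ns = Z # jac_args_v Ys Zs is ns"
proof -
  obtain m' where m: "m = Suc m'" using assms(2) by (cases m) auto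
  define f where "f = (\<lambda>j. take (is ! j - jprev is ns j) (drop (jprev is ns j) Zs)
                      @ [E_v (Ys ! j) (take (ns ! j) (drop (is ! j) Zs))])"
  define f' where "f' = (\<lambda>j. take (map Suc is ! j - jprev (map Suc is) ns j) (drop (jprev (map Suc is) ns j) (Z # Zs))
                      @ [E_v (Ys ! j) (take (ns ! j) (drop (map Suc is ! j) (Z # Zs)))])"
  have f0: "f' 0 = Z # f 0" using assms m by (simp add: f_def f'_def)
  have fj: "f' j = f j" if "j \<in> set [Suc 0..<m]" for j
  proof -
    have j: "0 < j" "j < m" using that by auto
    thus ?thesis using assms by (simp add: f_def f'_def jprev_shift)
  qed
  have "map f' [0..<m] = (Z # f 0) # map f [Suc 0..<m]"
    using f0 fj m by (simp add: upt_conv_Cons del: upt_Suc)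
  moreover have "map f [0..<m] = f 0 # map f [Suc 0..<m]"
    using m by (simp add: upt_conv_Cons del: upt_Suc)
  moreover have "drop (jprev (map Suc is) ns m) (Z # Zs) = drop (jprev is ns m) Zs"
    using assms by (simp add: jprev_shift)
  ultimately show ?thesis
    unfolding jac_args_v_def f_def[symmetric] f'_def[symmetric] using assms(1) by simp
qed

lemma jac_args_v_zero:
  assumes "length Ys' = m" "length is = m" "length ns = m"
  shows "jac_args_v (Y # Ys') Zs (0 # map (\<lambda>i. i + p) is) (p # ns) = E_v Y (take p Zs) # jac_args_v Ys' (drop p Zs) is ns"
proof -
  let ?is = "0 # map (\<lambda>i. i + p) is" and ?ns = "p # ns"
  define f where "f = (\<lambda>j. take (is ! j - jprev is ns j) (drop (jprev is ns j) (drop p Zs))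
                      @ [E_v (Ys' ! j) (take (ns ! j) (drop (is ! j) (drop p Zs)))])"
  define f' where "f' = (\<lambda>j. take (?is ! j - jprev ?is ?ns j) (drop (jprev ?is ?ns j) Zs)
                      @ [E_v ((Y # Ys') ! j) (take (?ns ! j) (drop (?is ! j) Zs))])"
  have f0: "f' 0 = [E_v Y (take p Zs)]" by (simp add: f'_def)
  have fj: "f' (Suc j) = f j" if "j \<in> set [0..<m]" for j
  proof -
    have j: "j < m" using that by auto
    have jp: "jprev ?is ?ns (Suc j) = jprev is ns j + p"
      using jprev_zero[of "Suc j" "is" p ns] j assms by simp
    show ?thesis unfolding f_def f'_def jp using j assms by (simp add: add.commute)
  qed
  have "map f' [0..<Suc m] = [E_v Y (take p Zs)] # map f [0..<m]"
  proof -
    have "map f' [0..<Suc m] = f' 0 # map (\<lambda>j. f' (Suc j)) [0..<m]"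
      by (simp add: upt_conv_Cons map_Suc_upt[symmetric] del: upt_Suc)
    also have "map (\<lambda>j. f' (Suc j)) [0..<m] = map f [0..<m]"
      using fj by (rule map_cong[OF refl])
    finally show ?thesis using f0 by simp
  qed
  moreover have "drop (jprev ?is ?ns (Suc m)) Zs = drop (jprev is ns m) (drop p Zs)"
    using jprev_zero[of "Suc m" "is" p ns] assms by (simp add: add.commute)
  ultimately show ?thesis
    unfolding jac_args_v_def f_def[symmetric] f'_def[symmetric] using assms(1) by simp
qed

lemma sum_jac_args_first_pos:
  "(\<Sum>q\<in>{q \<in> jac_index (Suc (length Ys)) (Suc (length Zs)). 0 < fst q ! 0}.
      g (jac_args_v (Y # Ys) (Z # Zs) (fst q) (snd q)))
   = (\<Sum>q\<in>jac_index (Suc (length Ys)) (length Zs). g (Z # jac_args_v (Y # Ys) Zs (fst q) (snd q)))"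
proof -
  let ?J = "jac_index (Suc (length Ys)) (length Zs)"
  have inj: "inj_on (\<lambda>q. (map Suc (fst q), snd q)) ?J"
    by (rule inj_onI) (auto simp: prod_eq_iff)
  have "(\<Sum>q\<in>{q \<in> jac_index (Suc (length Ys)) (Suc (length Zs)). 0 < fst q ! 0}.
          g (jac_args_v (Y # Ys) (Z # Zs) (fst q) (snd q)))
      = (\<Sum>q\<in>?J. g (jac_args_v (Y # Ys) (Z # Zs) (map Suc (fst q)) (snd q)))"
    using jac_pos_image[of "Suc (length Ys)" "length Zs"] by (simp add: sum.reindex[OF inj] split_def o_def)
  also have "\<dots> = (\<Sum>q\<in>?J. g (Z # jac_args_v (Y # Ys) Zs (fst q) (snd q)))"
  proof (rule sum.cong[OF refl])
    fix q assume "q \<in> ?J"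
    then have "length (fst q) = Suc (length Ys)" by (cases q) (simp add: jac_index_def)
    then show "g (jac_args_v (Y # Ys) (Z # Zs) (map Suc (fst q)) (snd q)) = g (Z # jac_args_v (Y # Ys) Zs (fst q) (snd q))"
      by (simp add: jac_args_v_shift)
  qed
  finally show ?thesis .
qed

lemma sum_jac_args_first_zero:
  "(\<Sum>q\<in>{q \<in> jac_index (Suc (length Ys)) (length Zs). fst q ! 0 = 0}. g (jac_args_v (Y # Ys) Zs (fst q) (snd q)))
   = (\<Sum>p\<le>length Zs. \<Sum>q\<in>jac_index (length Ys) (length Zs - p).
        g (E_v Y (take p Zs) # jac_args_v Ys (drop p Zs) (fst q) (snd q)))"
proof -
  let ?m = "length Ys" and ?n = "length Zs"
  let ?S = "SIGMA p:{..?n}. jac_index ?m (?n - p)"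
  have inj: "inj_on (\<lambda>(p, (is, ns)). (0 # map (\<lambda>i. i + p) is, p # ns)) ?S"
    by (rule inj_onI) auto
  have "(\<Sum>q\<in>{q \<in> jac_index (Suc ?m) ?n. fst q ! 0 = 0}. g (jac_args_v (Y # Ys) Zs (fst q) (snd q)))
      = (\<Sum>(p, q)\<in>?S. g (jac_args_v (Y # Ys) Zs (0 # map (\<lambda>i. i + p) (fst q)) (p # snd q)))"
    unfolding jac_zero_image sum.reindex[OF inj] by (rule sum.cong) (auto simp: split_def)
  also have "\<dots> = (\<Sum>p\<le>?n. \<Sum>q\<in>jac_index ?m (?n - p). g (jac_args_v (Y # Ys) Zs (0 # map (\<lambda>i. i + p) (fst q)) (p # snd q)))"
    by (rule sum.Sigma[symmetric]) auto
  also have "\<dots> = (\<Sum>p\<le>?n. \<Sum>q\<in>jac_index ?m (?n - p). g (E_v Y (take p Zs) # jac_args_v Ys (drop p Zs) (fst q) (snd q)))"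
  proof (intro sum.cong refl)
    fix p q assume "q \<in> jac_index ?m (?n - p)"
    then have "length (fst q) = ?m" "length (snd q) = ?m" by (cases q, simp add: jac_index_def)+
    then show "g (jac_args_v (Y # Ys) Zs (0 # map (\<lambda>i. i + p) (fst q)) (p # snd q))
        = g (E_v Y (take p Zs) # jac_args_v Ys (drop p Zs) (fst q) (snd q))"
      by (simp add: jac_args_v_zero)
  qed
  finally show ?thesis .
qed

lemma jac_sum_lin_ext: "jac_sum (lin_ext f X) Ys Zs = lin_ext (\<lambda>x. jac_sum (f x) Ys Zs) X"
  by (simp add: jac_sum_def E_v_lin_ext lin_ext_fsum)

lemma E_v_basis_Cons:
  "Ws \<noteq> [] \<Longrightarrow> E_v (basis (a # x)) Ws = basis [a] * E_v (basis x) Ws + dia a (hd Ws) * E_v (basis x) (tl Ws)"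
  by (cases Ws) (simp_all add: basis_Cons[of a x] E_v_letter_prod)

lemma jac_sum_one: "Ys \<noteq> [] \<Longrightarrow> jac_sum 1 Ys Zs = 0"
  unfolding jac_sum_def by (rule sum.neutral) (simp add: E_v_one jac_args_v_ne)

lemma jac_sum_basis_Cons:
  "jac_sum (basis (a # x)) (Y # Ys) Zs
   = basis [a] * jac_sum (basis x) (Y # Ys) Zs
     + (case Zs of [] \<Rightarrow> 0 | Z # Zs' \<Rightarrow> dia a Z * jac_sum (basis x) (Y # Ys) Zs')
     + (\<Sum>p\<le>length Zs. dia a (E_v Y (take p Zs)) * jac_sum (basis x) Ys (drop p Zs))"
proof -
  let ?J = "jac_index (Suc (length Ys)) (length Zs)"
  define g where "g Ws = dia a (hd Ws) * E_v (basis x) (tl Ws)" for Ws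
  let ?G = "\<lambda>q. g (jac_args_v (Y # Ys) Zs (fst q) (snd q))"
  have "jac_sum (basis (a # x)) (Y # Ys) Zs = basis [a] * jac_sum (basis x) (Y # Ys) Zs + (\<Sum>q\<in>?J. ?G q)"
    unfolding jac_sum_def g_def by (simp add: E_v_basis_Cons jac_args_v_ne sum.distrib sum_distrib_left)
  moreover have "?J = {q \<in> ?J. 0 < fst q ! 0} \<union> {q \<in> ?J. fst q ! 0 = 0}" by auto
  then have "(\<Sum>q\<in>?J. ?G q) = (\<Sum>q\<in>{q \<in> ?J. 0 < fst q ! 0}. ?G q) + (\<Sum>q\<in>{q \<in> ?J. fst q ! 0 = 0}. ?G q)"
    by (subst sum.union_disjoint[symmetric]) auto
  moreover have "(\<Sum>q\<in>{q \<in> ?J. 0 < fst q ! 0}. ?G q)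
      = (case Zs of [] \<Rightarrow> 0 | Z # Zs' \<Rightarrow> dia a Z * jac_sum (basis x) (Y # Ys) Zs')"
  proof (cases Zs)
    case Nil
    have "{q \<in> ?J. 0 < fst q ! 0} = {}"
      unfolding Nil list.size(3) by (rule jac_pos_empty) simp
    with Nil show ?thesis by (simp only: sum.empty list.case)
  next
    case (Cons Z Zs')
    then show ?thesis
      using sum_jac_args_first_pos[where Zs = Zs' and g = g] by (simp add: jac_sum_def sum_distrib_left g_def)
  qed
  moreover have "(\<Sum>q\<in>{q \<in> ?J. fst q ! 0 = 0}. ?G q)
      = (\<Sum>p\<le>length Zs. dia a (E_v Y (take p Zs)) * jac_sum (basis x) Ys (drop p Zs))"
    using sum_jac_args_first_zero[where g = g] by (simp add: jac_sum_def sum_distrib_left g_def)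
  ultimately show ?thesis by (simp add: add.assoc)
qed

lemma pre_jacobi_basis: "E_v (E_v (basis x) Ys) Zs = jac_sum (basis x) Ys Zs"
proof (induction x arbitrary: Ys Zs)
  case Nil
  show ?case by (cases Ys) (simp_all add: jac_sum_Nil jac_sum_one basis_Nil E_v_one)
next
  case (Cons a x)
  note IH = Cons.IH
  show ?case
  proof (cases Ys)
    case Nil
    then show ?thesis by (simp add: jac_sum_Nil)
  next
    case (Cons Y Ys')
    have "E_v (basis [a] * E_v (basis x) (Y # Ys')) Zs
        = basis [a] * jac_sum (basis x) (Y # Ys') Zs
          + (case Zs of [] \<Rightarrow> 0 | Z # Zs' \<Rightarrow> dia a Z * jac_sum (basis x) (Y # Ys') Zs')"
    proof (cases Zs)
      case Nil
      then show ?thesis using IH[of "Y # Ys'" "[]"] by simp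
    next
      case (Cons Z Zs')
      then show ?thesis by (simp add: E_v_letter_prod IH)
    qed
    with Cons show ?thesis
      by (simp add: E_v_basis_Cons E_v_mult E_v_dia jac_sum_basis_Cons IH)
  qed
qed

lemma pre_jacobi: "E_v (E_v X Ys) Zs = jac_sum X Ys Zs"
proof -
  have "E_v (E_v (lin_ext basis X) Ys) Zs = jac_sum (lin_ext basis X) Ys Zs"
    by (simp only: E_v_lin_ext jac_sum_lin_ext pre_jacobi_basis)
  thus ?thesis by simp
qed

section \<open>The cobar differential and the higher homotopies\<close>

abbreviation unit_letter where "unit_letter \<equiv> basis [unitA]"

definition dgen_v :: "'b \<Rightarrow> 'b list zvec" where
  "dgen_v a = susp (dA a) + lin_ext (\<lambda>(x, y). basis [x] * basis [y]) (Delta a) + basis [a] * unit_letter + unit_letter * basis [a]"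

lemma finite_rdiag[simp]: "finite (rdiag A a)" by (simp add: rdiag_def)
lemma finite_dgen[simp]: "finite (dgen A a)"
  unfolding dgen_def by (intro finite_zadd finite_zsum) auto

lemma vec_rdiag: "vec (rdiag A a) = Delta a + (basis (a, unitA) + basis (unitA, a))"
  by (simp add: rdiag_def vec_zadd)

lemma vec_dgen: "vec (dgen A a) = dgen_v a"
proof -
  have "vec (dgen A a) = susp (dA a) + lin_ext (\<lambda>(x, y). basis [x, y]) (vec (rdiag A a))"
    unfolding dgen_def by (simp add: vec_zadd finite_zsum vec_zsum_lin_ext susp_def split_def)
  also have "\<dots> = dgen_v a"
    by (simp add: vec_rdiag dgen_v_def basis_append[symmetric] add.assoc)
  finally show ?thesis .
qed

definition dO_word_v :: "'b list \<Rightarrow> 'b list zvec" where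
  "dO_word_v w = (\<Sum>i<length w. basis (take i w) * dgen_v (w ! i) * basis (drop (Suc i) w))"

lemma finite_dO_word[simp]: "finite (dO_word A w)"
  by (simp add: dO_word_def finite_zsum)

lemma vec_dO_word: "vec (dO_word A w) = dO_word_v w"
proof -
  have "vec (dO_word A w) = (\<Sum>i<length w. lin_ext (\<lambda>u. basis (take i w @ u @ drop (Suc i) w)) (dgen_v (w ! i)))"
    unfolding dO_word_def by (simp add: vec_zsum finite_zsum lin_ext_vec[symmetric] vec_dgen)
  also have "\<dots> = dO_word_v w"
    unfolding dO_word_v_def by (simp add: basis_append mult_lin_ext_left[symmetric] mult_lin_ext_right[symmetric] mult.assoc)
  finally show ?thesis .
qed

lemma dO_word_v_Nil[simp]: "dO_word_v [] = 0" by (simp add: dO_word_v_def)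

lemma dO_word_v_Cons: "dO_word_v (a # w) = dgen_v a * basis w + basis [a] * dO_word_v w"
proof -
  have "dO_word_v (a # w) = basis [] * dgen_v a * basis w + (\<Sum>i<length w. basis (a # take i w) * dgen_v (w ! i) * basis (drop (Suc i) w))"
    unfolding dO_word_v_def by (simp add: sum.lessThan_Suc_shift del: sum.lessThan_Suc)
  also have "\<dots> = dgen_v a * basis w + basis [a] * dO_word_v w"
    by (simp add: dO_word_v_def basis_Nil basis_mult times_list_def sum_distrib_left mult.assoc[symmetric])
  finally show ?thesis .
qed

lemma dO_word_v_append: "dO_word_v (v @ w) = dO_word_v v * basis w + basis v * dO_word_v w"
proof (induction v)
  case Nil thus ?case by (simp add: basis_Nil)
next
  case (Cons a v)
  show ?case
    by (simp add: dO_word_v_Cons Cons.IH basis_append distrib_left distrib_right mult.assoc basis_Cons[of a v])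
qed

definition dO_v :: "'b list zvec \<Rightarrow> 'b list zvec" where "dO_v X = lin_ext dO_word_v X"

lemma vec_dO: "finite X \<Longrightarrow> vec (dO A X) = dO_v (vec X)"
  unfolding dO_def dO_v_def by (simp add: vec_zsum_lin_ext vec_dO_word)

lemma dO_v_add[simp]: "dO_v (X + Y) = dO_v X + dO_v Y" by (simp add: dO_v_def)
lemma dO_v_zero[simp]: "dO_v 0 = 0" by (simp add: dO_v_def)
lemma dO_v_lin_ext: "dO_v (lin_ext f X) = lin_ext (\<lambda>x. dO_v (f x)) X" by (simp add: dO_v_def lin_ext_lin_ext)
lemma dO_v_basis: "dO_v (basis w) = dO_word_v w" by (simp add: dO_v_def)
lemma dO_v_one[simp]: "dO_v 1 = 0" by (simp add: dO_v_def basis_Nil[symmetric])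
lemma dO_v_letter: "dO_v (basis [a]) = dgen_v a" by (simp add: dO_v_def dO_word_v_Cons basis_Nil)

lemma dO_v_basis_mult: "dO_v (basis v * Y) = dO_word_v v * Y + basis v * dO_v Y"
proof -
  have "dO_v (basis v * Y) = dO_v (lin_ext (\<lambda>w. basis (v @ w)) Y)"
    by (subst mult_expand_right) (simp add: basis_append)
  also have "\<dots> = lin_ext (\<lambda>w. dO_word_v v * basis w + basis v * dO_word_v w) Y"
    by (simp add: dO_v_lin_ext dO_v_basis dO_word_v_append)
  also have "\<dots> = dO_word_v v * Y + basis v * dO_v Y"
    by (simp add: lin_ext_fadd lin_ext_mult_left dO_v_def)
  finally show ?thesis .
qed

lemma dO_v_mult: "dO_v (X * Y) = dO_v X * Y + X * dO_v Y"
proof -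
  have "dO_v (X * Y) = lin_ext (\<lambda>v. dO_v (basis v * Y)) X"
    by (subst mult_expand_left) (simp add: dO_v_lin_ext)
  also have "\<dots> = lin_ext (\<lambda>v. dO_word_v v * Y + basis v * dO_v Y) X"
    by (simp add: dO_v_basis_mult)
  also have "\<dots> = dO_v X * Y + X * dO_v Y"
    by (simp add: lin_ext_fadd lin_ext_mult_right dO_v_def)
  finally show ?thesis .
qed

definition dia_Delta_terms :: "'b \<Rightarrow> 'b list zvec \<Rightarrow> 'b list zvec" where
  "dia_Delta_terms a Y = lin_ext (\<lambda>(x, z). dia x Y * basis [z] + basis [x] * dia z Y) (Delta a)"

definition dcomm_rhs :: "'b \<Rightarrow> 'b list zvec \<Rightarrow> 'b list zvec" where
  "dcomm_rhs a Y = dia_Delta_terms a Y + dia a Y * unit_letter + unit_letter * dia a Y"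

definition dcomm :: "'b \<Rightarrow> 'b list zvec \<Rightarrow> 'b list zvec" where
  "dcomm a Y = dO_v (dia a Y) + dia_ext (dA a) Y + dia a (dO_v Y)"

lemma dia_susp: "dia a (susp Y) = lin_ext (\<lambda>y. susp (mu a y)) Y"
  by (simp add: susp_def dia_lin_ext dia_letter)

lemma dia_ext_one: "dia_ext X 1 = lin_ext (\<lambda>c. if eps c then 1 else 0) X"
  by (simp add: dia_ext_def dia_one)

lemma dcomm_one: "dcomm a 1 = 0"
proof -
  have "dia_ext (dA a) 1 = 0"
    unfolding dia_ext_one by (rule trans[OF lin_ext_cong lin_ext_fzero]) (use unit_notin_bd counit_iff in auto)
  thus ?thesis by (simp add: dcomm_def dia_one)
qed

lemma dcomm_rhs_one: "dcomm_rhs a 1 = 0"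
proof -
  have "dia_Delta_terms a 1 = lin_ext (\<lambda>(x, z). if eps x then basis [z] else 0) (Delta a) + lin_ext (\<lambda>(x, z). if eps z then basis [x] else 0) (Delta a)"
    by (simp add: dia_Delta_terms_def dia_one split_def lin_ext_fadd[symmetric] cong: if_cong)
  also have "\<dots> = 0" by (simp add: Delta_counit_left Delta_counit_right)
  finally show ?thesis by (simp add: dcomm_rhs_def dia_one)
qed

lemma dia_ext_mult_Delta: "dia_ext (dA a) (Y1 * Y2) = lin_ext (\<lambda>(x, y). dia_ext (dA x) Y1 * dia y Y2 + dia x Y1 * dia_ext (dA y) Y2) (Delta a)"
proof -
  have "dia_ext (dA a) (Y1 * Y2) = lin_ext (\<lambda>c. lin_ext (\<lambda>p. dia (fst p) Y1 * dia (snd p) Y2) (Delta c)) (dA a)"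
    by (simp add: dia_ext_def dia_mult split_def)
  also have "\<dots> = lin_ext (\<lambda>(x, y). lin_ext (\<lambda>u. dia u Y1 * dia y Y2) (dA x) + lin_ext (\<lambda>v. dia x Y1 * dia v Y2) (dA y)) (Delta a)"
    using Delta_dA[of "\<lambda>p. dia (fst p) Y1 * dia (snd p) Y2" a] by simp
  also have "\<dots> = lin_ext (\<lambda>(x, y). dia_ext (dA x) Y1 * dia y Y2 + dia x Y1 * dia_ext (dA y) Y2) (Delta a)"
    by (simp add: dia_ext_def lin_ext_mult_left lin_ext_mult_right)
  finally show ?thesis .
qed

lemma dcomm_mult: "dcomm a (Y1 * Y2) = lin_ext (\<lambda>(x, z). dcomm x Y1 * dia z Y2 + dia x Y1 * dcomm z Y2) (Delta a)"
proof -
  have d_dia: "dO_v (dia a (Y1 * Y2)) = lin_ext (\<lambda>(x, z). dO_v (dia x Y1) * dia z Y2 + dia x Y1 * dO_v (dia z Y2)) (Delta a)"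
    by (simp add: dia_mult dO_v_lin_ext dO_v_mult split_def)
  have dia_d: "dia a (dO_v (Y1 * Y2)) = lin_ext (\<lambda>(x, z). dia x (dO_v Y1) * dia z Y2 + dia x Y1 * dia z (dO_v Y2)) (Delta a)"
    by (simp add: dO_v_mult dia_mult lin_ext_fadd split_def)
  have "dcomm a (Y1 * Y2) = lin_ext (\<lambda>p. (dO_v (dia (fst p) Y1) * dia (snd p) Y2 + dia (fst p) Y1 * dO_v (dia (snd p) Y2))
        + (dia_ext (dA (fst p)) Y1 * dia (snd p) Y2 + dia (fst p) Y1 * dia_ext (dA (snd p)) Y2)
        + (dia (fst p) (dO_v Y1) * dia (snd p) Y2 + dia (fst p) Y1 * dia (snd p) (dO_v Y2))) (Delta a)"
    unfolding dcomm_def d_dia dia_d dia_ext_mult_Delta by (simp add: lin_ext_fadd split_def)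
  also have "\<dots> = lin_ext (\<lambda>(x, z). dcomm x Y1 * dia z Y2 + dia x Y1 * dcomm z Y2) (Delta a)"
    by (rule lin_ext_cong) (simp add: dcomm_def split_def algebra_simps)
  finally show ?thesis .
qed

lemma Delta_coassoc': "lin_ext (\<lambda>p. lin_ext (\<lambda>q. f (fst q) (snd q) (snd p)) (Delta (fst p))) (Delta b)
   = lin_ext (\<lambda>p. lin_ext (\<lambda>q. (f (fst p) (fst q) (snd q) :: 'y zvec)) (Delta (snd p))) (Delta b)"
  using Delta_coassoc[of f b] by (simp add: split_def)

lemma dia_Delta_terms_mult: "dia_Delta_terms a (Y1 * Y2) = lin_ext (\<lambda>(x, z). dia_Delta_terms x Y1 * dia z Y2 + dia x Y1 * dia_Delta_terms z Y2) (Delta a)"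
proof -
  define T1 where "T1 = lin_ext (\<lambda>p. lin_ext (\<lambda>q. dia (fst q) Y1 * basis [snd q] * dia (snd p) Y2) (Delta (fst p))) (Delta a)"
  define T2 where "T2 = lin_ext (\<lambda>p. lin_ext (\<lambda>q. basis [fst q] * dia (snd q) Y1 * dia (snd p) Y2) (Delta (fst p))) (Delta a)"
  define T3 where "T3 = lin_ext (\<lambda>p. lin_ext (\<lambda>q. dia (fst p) Y1 * dia (fst q) Y2 * basis [snd q]) (Delta (snd p))) (Delta a)"
  define T4 where "T4 = lin_ext (\<lambda>p. lin_ext (\<lambda>q. dia (fst p) Y1 * basis [fst q] * dia (snd q) Y2) (Delta (snd p))) (Delta a)"
  have R: "lin_ext (\<lambda>(x, z). dia_Delta_terms x Y1 * dia z Y2 + dia x Y1 * dia_Delta_terms z Y2) (Delta a) = T1 + T2 + T3 + T4"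
    unfolding T1_def T2_def T3_def T4_def dia_Delta_terms_def
    by (simp add: split_def lin_ext_fadd mult_lin_ext_right mult_lin_ext_left distrib_left distrib_right mult.assoc add.assoc)
  have L: "dia_Delta_terms a (Y1 * Y2) = lin_ext (\<lambda>p. lin_ext (\<lambda>q. dia (fst q) Y1 * dia (snd q) Y2 * basis [snd p]) (Delta (fst p))) (Delta a)
      + lin_ext (\<lambda>p. lin_ext (\<lambda>q. basis [fst p] * dia (fst q) Y1 * dia (snd q) Y2) (Delta (snd p))) (Delta a)"
    unfolding dia_Delta_terms_def by (simp add: dia_mult split_def lin_ext_fadd mult_lin_ext_right mult_lin_ext_left mult.assoc)
  have c14: "T1 = T4" unfolding T1_def T4_def
    using Delta_coassoc'[of "\<lambda>u v w. dia u Y1 * basis [v] * dia w Y2" a] by simp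
  have c2: "T2 = lin_ext (\<lambda>p. lin_ext (\<lambda>q. basis [fst p] * dia (fst q) Y1 * dia (snd q) Y2) (Delta (snd p))) (Delta a)"
    unfolding T2_def using Delta_coassoc'[of "\<lambda>u v w. basis [u] * dia v Y1 * dia w Y2" a] by simp
  have c3: "T3 = lin_ext (\<lambda>p. lin_ext (\<lambda>q. dia (fst q) Y1 * dia (snd q) Y2 * basis [snd p]) (Delta (fst p))) (Delta a)"
    unfolding T3_def using Delta_coassoc'[of "\<lambda>u v w. dia u Y1 * dia v Y2 * basis [w]" a] by simp
  show ?thesis unfolding R L c14 c2 c3 by (simp add: algebra_simps)
qed

lemma dcomm_rhs_mult: "dcomm_rhs a (Y1 * Y2) = lin_ext (\<lambda>(x, z). dcomm_rhs x Y1 * dia z Y2 + dia x Y1 * dcomm_rhs z Y2) (Delta a)"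
proof -
  have "lin_ext (\<lambda>(x, z). dcomm_rhs x Y1 * dia z Y2 + dia x Y1 * dcomm_rhs z Y2) (Delta a)
      = lin_ext (\<lambda>(x, z). dia_Delta_terms x Y1 * dia z Y2 + dia x Y1 * dia_Delta_terms z Y2) (Delta a)
        + lin_ext (\<lambda>(x, z). unit_letter * (dia x Y1 * dia z Y2)) (Delta a) + lin_ext (\<lambda>(x, z). (dia x Y1 * dia z Y2) * unit_letter) (Delta a)"
    unfolding dcomm_rhs_def by (simp add: lin_ext_fadd[symmetric] split_def algebra_simps)
  also have "\<dots> = dcomm_rhs a (Y1 * Y2)"
    by (simp add: dcomm_rhs_def dia_Delta_terms_mult dia_mult lin_ext_mult_left lin_ext_mult_right split_def)
  finally show ?thesis by simp
qed

lemma dO_v_susp: "dO_v (susp X) = lin_ext dgen_v X"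
  by (simp add: susp_def dO_v_lin_ext dO_v_letter)

lemma lin_ext_letter_times: "lin_ext (\<lambda>c. basis [c] * Z) X = susp X * Z"
  by (simp add: susp_def lin_ext_mult_right)
lemma lin_ext_times_letter: "lin_ext (\<lambda>c. Z * basis [c]) X = Z * susp X"
  by (simp add: susp_def lin_ext_mult_left)

lemma dcomm_letter: "dcomm a (basis [b]) = dcomm_rhs a (basis [b])"
proof -
  define cross where "cross = lin_ext (\<lambda>p. lin_ext (\<lambda>q. susp (mu (fst p) (fst q)) * susp (mu (snd p) (snd q))) (Delta b)) (Delta a)"
  have dA_mu_letter: "lin_ext (\<lambda>c. susp (dA c)) (mu a b) = lin_ext (\<lambda>x. susp (mu x b)) (dA a) + lin_ext (\<lambda>x. susp (mu a x)) (dA b)"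
    using dA_mu[of "\<lambda>y. basis [y]" a b] by (simp add: susp_def)
  have cross_expand: "cross = lin_ext (\<lambda>p. lin_ext (\<lambda>q. lin_ext (\<lambda>u. lin_ext (\<lambda>v. basis [u] * basis [v]) (mu (snd p) (snd q))) (mu (fst p) (fst q))) (Delta b)) (Delta a)"
    unfolding cross_def by (simp only: susp_def mult_lin_ext_left, simp only: mult_lin_ext_right)
  have Delta_mu_letters: "lin_ext (\<lambda>c. lin_ext (\<lambda>(x, y). basis [x] * basis [y]) (Delta c)) (mu a b) = cross"
    using Delta_mu[of "\<lambda>p. basis [fst p] * basis [snd p]" a b] cross_expand
    by (simp add: split_def)
  have d_of_dia: "dO_v (dia a (basis [b])) = lin_ext (\<lambda>x. susp (mu x b)) (dA a) + lin_ext (\<lambda>x. susp (mu a x)) (dA b) + cross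
      + (susp (mu a b) * unit_letter + unit_letter * susp (mu a b))"
  proof -
    have "dO_v (dia a (basis [b])) = lin_ext dgen_v (mu a b)" by (simp add: dia_letter dO_v_susp)
    also have "\<dots> = lin_ext (\<lambda>c. susp (dA c) + lin_ext (\<lambda>(x, y). basis [x] * basis [y]) (Delta c) + basis [c] * unit_letter + unit_letter * basis [c]) (mu a b)"
      by (rule lin_ext_cong) (simp add: dgen_v_def)
    also have "\<dots> = lin_ext (\<lambda>c. susp (dA c)) (mu a b) + lin_ext (\<lambda>c. lin_ext (\<lambda>(x, y). basis [x] * basis [y]) (Delta c)) (mu a b)
       + lin_ext (\<lambda>c. basis [c] * unit_letter) (mu a b) + lin_ext (\<lambda>c. unit_letter * basis [c]) (mu a b)"
      by (simp only: lin_ext_fadd)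
    finally show ?thesis by (simp only: dA_mu_letter Delta_mu_letters lin_ext_letter_times lin_ext_times_letter add.assoc)
  qed
  have dia_ext_dA: "dia_ext (dA a) (basis [b]) = lin_ext (\<lambda>x. susp (mu x b)) (dA a)"
    by (simp add: dia_ext_def dia_letter)
  have dia_cross: "dia a (lin_ext (\<lambda>p. basis [fst p] * basis [snd p]) (Delta b)) = cross"
    unfolding cross_def by (simp add: dia_lin_ext dia_mult dia_letter split_def lin_ext_swap[of _ "Delta b"])
  have dia_of_d: "dia a (dO_v (basis [b])) = lin_ext (\<lambda>x. susp (mu a x)) (dA b) + cross
      + lin_ext (\<lambda>(p, q). susp (mu p b) * basis [q] + basis [p] * susp (mu q b)) (Delta a)"
    by (simp add: dO_v_letter dgen_v_def dia_susp dia_cross dia_mult dia_letter lin_ext_fadd split_def add.assoc)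
  have "dcomm a (basis [b]) = susp (mu a b) * unit_letter + unit_letter * susp (mu a b) + lin_ext (\<lambda>(p, q). susp (mu p b) * basis [q] + basis [p] * susp (mu q b)) (Delta a)"
    unfolding dcomm_def d_of_dia dia_ext_dA dia_of_d by (simp add: algebra_simps)
  also have "\<dots> = dcomm_rhs a (basis [b])"
    by (simp add: dcomm_rhs_def dia_Delta_terms_def dia_letter algebra_simps)
  finally show ?thesis .
qed

lemma dcomm_eq_dcomm_rhs_basis: "dcomm a (basis y) = dcomm_rhs a (basis y)"
proof (induction y arbitrary: a)
  case Nil thus ?case by (simp add: basis_Nil dcomm_one dcomm_rhs_one)
next
  case (Cons b y)
  show ?case
    by (simp add: basis_Cons[of b y] dcomm_mult dcomm_rhs_mult dcomm_letter Cons.IH)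
qed

lemma dcomm_lin_ext: "dcomm a (lin_ext f X) = lin_ext (\<lambda>x. dcomm a (f x)) X"
  by (simp add: dcomm_def dia_lin_ext dO_v_lin_ext dia_ext_lin_ext_right lin_ext_fadd)
lemma dcomm_rhs_lin_ext: "dcomm_rhs a (lin_ext f X) = lin_ext (\<lambda>x. dcomm_rhs a (f x)) X"
  by (simp add: dcomm_rhs_def dia_Delta_terms_def dia_lin_ext lin_ext_fadd split_def mult_lin_ext_left mult_lin_ext_right lin_ext_swap[of _ X])

lemma dcomm_eq_dcomm_rhs: "dcomm a Y = dcomm_rhs a Y"
proof -
  have "dcomm a (lin_ext basis Y) = dcomm_rhs a (lin_ext basis Y)" by (simp only: dcomm_lin_ext dcomm_rhs_lin_ext dcomm_eq_dcomm_rhs_basis)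
  thus ?thesis by simp
qed

definition homotopy_lhs :: "'b list zvec \<Rightarrow> 'b list zvec list \<Rightarrow> 'b list zvec" where
  "homotopy_lhs P Ys = dO_v (E_v P Ys) + E_v (dO_v P) Ys + (\<Sum>i<length Ys. E_v P (Ys[i := dO_v (Ys ! i)]))"

definition merge_at :: "'b list zvec list \<Rightarrow> nat \<Rightarrow> 'b list zvec list" where
  "merge_at Ys i = take i Ys @ [Ys ! i * Ys ! Suc i] @ drop (Suc (Suc i)) Ys"

definition homotopy_rhs :: "'b list zvec \<Rightarrow> 'b list zvec list \<Rightarrow> 'b list zvec" where
  "homotopy_rhs P Ys = (if Ys = [] then 0 else hd Ys * E_v P (tl Ys) + E_v P (butlast Ys) * last Ys
              + (\<Sum>i<length Ys - 1. E_v P (merge_at Ys i)))"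

lemma homotopy_lhs_Nil: "homotopy_lhs P [] = 0" by (simp add: homotopy_lhs_def)
lemma homotopy_rhs_Nil: "homotopy_rhs P [] = 0" by (simp add: homotopy_rhs_def)

lemma E_v_susp: "E_v (susp X) Ys = lin_ext (\<lambda>c. E_v (basis [c]) Ys) X"
  by (simp add: susp_def E_v_lin_ext)

lemma E_v_two_letters: "E_v (basis [x] * basis [z]) Ys =
   (case Ys of [] \<Rightarrow> basis [x] * basis [z] | [Y] \<Rightarrow> basis [x] * dia z Y + dia x Y * basis [z]
     | [Y1, Y2] \<Rightarrow> dia x Y1 * dia z Y2 | _ \<Rightarrow> 0)"
proof (cases Ys)
  case Nil thus ?thesis by simp
next
  case (Cons Y Ys')
  show ?thesis
  proof (cases Ys')
    case Nil thus ?thesis using Cons by (simp add: E_v_letter_prod E_v_letter_single)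
  next
    case (Cons Y2 Ys'')
    thus ?thesis using \<open>Ys = Y # Ys'\<close>
      by (cases Ys'') (simp_all add: E_v_letter_prod E_v_letter_single E_v_letter_many)
  qed
qed

lemma E_v_dgen_v_single: "E_v (dgen_v a) [Y] = dia_ext (dA a) Y + dcomm_rhs a Y + basis [a] * Y + Y * basis [a]"
proof -
  have "E_v (dgen_v a) [Y] = dia_ext (dA a) Y + lin_ext (\<lambda>p. basis [fst p] * dia (snd p) Y + dia (fst p) Y * basis [snd p]) (Delta a)
      + (basis [a] * dia unitA Y + dia a Y * unit_letter) + (unit_letter * dia a Y + dia unitA Y * basis [a])"
    by (simp add: dgen_v_def E_v_susp E_v_letter_single dia_ext_def E_v_lin_ext split_def E_v_two_letters)
  thus ?thesis by (simp add: dia_unit dcomm_rhs_def dia_Delta_terms_def algebra_simps split_def)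
qed

lemma E_v_dgen_v_pair: "E_v (dgen_v a) [Y1, Y2] = dia a (Y1 * Y2) + dia a Y1 * Y2 + Y1 * dia a Y2"
proof -
  have "E_v (dgen_v a) [Y1, Y2] = lin_ext (\<lambda>p. dia (fst p) Y1 * dia (snd p) Y2) (Delta a)
      + dia a Y1 * dia unitA Y2 + dia unitA Y1 * dia a Y2"
    by (simp add: dgen_v_def E_v_susp E_v_letter_many E_v_lin_ext split_def E_v_two_letters)
  thus ?thesis by (simp add: dia_unit dia_mult split_def)
qed

lemma E_v_dgen_v_many: "3 \<le> length Ys \<Longrightarrow> E_v (dgen_v a) Ys = 0"
proof -
  assume l: "3 \<le> length Ys"
  then obtain Y1 Y2 Y3 Ys' where c: "Ys = Y1 # Y2 # Y3 # Ys'"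
    by (cases Ys; cases "tl Ys"; cases "tl (tl Ys)") auto
  show ?thesis using c by (simp add: dgen_v_def E_v_susp E_v_letter_many E_v_lin_ext split_def E_v_two_letters)
qed

lemma homotopy_lhs_letter_single: "homotopy_lhs (basis [a]) [Y] = basis [a] * Y + Y * basis [a]"
proof -
  have "homotopy_lhs (basis [a]) [Y] = dcomm a Y + (dcomm_rhs a Y + basis [a] * Y + Y * basis [a])"
    by (simp add: homotopy_lhs_def E_v_letter_single dO_v_letter E_v_dgen_v_single dcomm_def algebra_simps)
  thus ?thesis by (simp add: dcomm_eq_dcomm_rhs)
qed

lemma homotopy_lhs_letter_pair: "homotopy_lhs (basis [a]) [Y1, Y2] = dia a (Y1 * Y2) + dia a Y1 * Y2 + Y1 * dia a Y2"
  by (simp add: homotopy_lhs_def E_v_letter_many dO_v_letter E_v_dgen_v_pair numeral_2_eq_2 lessThan_Suc)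

lemma E_v_dgen_v_prod: "E_v (dgen_v a * Q) (Y # Ys') = dgen_v a * E_v Q (Y # Ys') + E_v (dgen_v a) [Y] * E_v Q Ys'
   + (case Ys' of [] \<Rightarrow> 0 | Y2 # Ys'' \<Rightarrow> E_v (dgen_v a) [Y, Y2] * E_v Q Ys'')"
proof (cases Ys')
  case Nil thus ?thesis by (simp add: E_v_mult)
next
  case (Cons Y2 Ys'')
  have z: "(\<Sum>p\<le>length Ys''. E_v (dgen_v a) (Y # Y2 # take p Ys'') * E_v Q (drop p Ys'')) = E_v (dgen_v a) [Y, Y2] * E_v Q Ys''"
  proof (cases Ys'')
    case Nil thus ?thesis by simp
  next
    case (Cons Z Zs)
    have "(\<Sum>p\<le>length Zs. E_v (dgen_v a) (Y # Y2 # Z # take p Zs) * E_v Q (drop p Zs)) = 0"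
      by (rule sum.neutral) (simp add: E_v_dgen_v_many)
    thus ?thesis using Cons by (simp add: sum.atMost_Suc_shift del: sum.atMost_Suc)
  qed
  show ?thesis using Cons
    by (simp add: E_v_mult sum.atMost_Suc_shift z del: sum.atMost_Suc)
qed

lemma sum_update_Cons: "(\<Sum>i<length (Y # Ys'). F ((Y # Ys')[i := D ((Y # Ys') ! i)]))
   = F (D Y # Ys') + (\<Sum>j<length Ys'. F (Y # Ys'[j := D (Ys' ! j)]))"
  by (simp add: sum.lessThan_Suc_shift del: sum.lessThan_Suc)

lemma homotopy_lhs_letter_prod: "homotopy_lhs (basis [a] * Q) (Y # Ys') = basis [a] * homotopy_lhs Q (Y # Ys') + dia a Y * homotopy_lhs Q Ys'
    + homotopy_lhs (basis [a]) [Y] * E_v Q Ys' + (case Ys' of [] \<Rightarrow> 0 | Y2 # Ys'' \<Rightarrow> homotopy_lhs (basis [a]) [Y, Y2] * E_v Q Ys'')"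
proof -
  have A: "(\<Sum>j<length Ys'. E_v (basis [a] * Q) (Y # Ys'[j := dO_v (Ys' ! j)]))
      = basis [a] * (\<Sum>j<length Ys'. E_v Q (Y # Ys'[j := dO_v (Ys' ! j)])) + dia a Y * (\<Sum>j<length Ys'. E_v Q (Ys'[j := dO_v (Ys' ! j)]))"
    by (simp add: E_v_letter_prod sum.distrib sum_distrib_left)
  have L1: "homotopy_lhs (basis [a]) [Y] = dO_v (dia a Y) + E_v (dgen_v a) [Y] + dia a (dO_v Y)"
    by (simp add: homotopy_lhs_def E_v_letter_single dO_v_letter)
  have L2: "Ys' = Y2 # Ys'' \<Longrightarrow> homotopy_lhs (basis [a]) [Y, Y2] = E_v (dgen_v a) [Y, Y2]" for Y2 Ys''
    by (simp add: homotopy_lhs_def E_v_letter_many dO_v_letter numeral_2_eq_2 lessThan_Suc)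
  have S1: "(\<Sum>i<length (Y # Ys'). E_v (basis [a] * Q) ((Y # Ys')[i := dO_v ((Y # Ys') ! i)]))
     = E_v (basis [a] * Q) (dO_v Y # Ys') + (\<Sum>j<length Ys'. E_v (basis [a] * Q) (Y # Ys'[j := dO_v (Ys' ! j)]))"
    by (rule sum_update_Cons)
  have S2: "(\<Sum>i<length (Y # Ys'). E_v Q ((Y # Ys')[i := dO_v ((Y # Ys') ! i)]))
     = E_v Q (dO_v Y # Ys') + (\<Sum>j<length Ys'. E_v Q (Y # Ys'[j := dO_v (Ys' ! j)]))"
    by (rule sum_update_Cons)
  show ?thesis
  proof (cases Ys')
    case Nil
    show ?thesis using Nil
      by (simp add: homotopy_lhs_def L1 E_v_letter_prod E_v_letter_single dO_v_mult dO_v_letter E_v_dgen_v_prod sum_update_Cons algebra_simps)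
  next
    case (Cons Y2 Ys'')
    have c1: "(case Ys' of [] \<Rightarrow> 0 | Y2 # Ys'' \<Rightarrow> E_v (dgen_v a) [Y, Y2] * E_v Q Ys'') = E_v (dgen_v a) [Y, Y2] * E_v Q Ys''"
      using Cons by simp
    have c2: "(case Ys' of [] \<Rightarrow> 0 | Y2 # Ys'' \<Rightarrow> homotopy_lhs (basis [a]) [Y, Y2] * E_v Q Ys'') = E_v (dgen_v a) [Y, Y2] * E_v Q Ys''"
      using Cons L2 by simp
    show ?thesis
      unfolding homotopy_lhs_def[of "basis [a] * Q" "Y # Ys'"] homotopy_lhs_def[of Q "Y # Ys'"] homotopy_lhs_def[of Q Ys'] S1 S2 L1 c2
      by (simp add: E_v_letter_prod E_v_letter_single dO_v_mult dO_v_letter E_v_dgen_v_prod c1 A algebra_simps sum.distrib sum_distrib_left)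
  qed
qed

lemma merge_at_Suc: "merge_at (Y # Ys) (Suc j) = Y # merge_at Ys j" by (simp add: merge_at_def)
lemma merge_at_0: "merge_at (Y # Y2 # Ys) 0 = (Y * Y2) # Ys" by (simp add: merge_at_def)

lemma homotopy_rhs_letter_prod: "homotopy_rhs (basis [a] * Q) (Y # Ys') = basis [a] * homotopy_rhs Q (Y # Ys') + dia a Y * homotopy_rhs Q Ys'
    + (Y * basis [a] + basis [a] * Y) * E_v Q Ys'
    + (case Ys' of [] \<Rightarrow> 0 | Y2 # Ys'' \<Rightarrow> (dia a (Y * Y2) + dia a Y * Y2 + Y * dia a Y2) * E_v Q Ys'')"
proof (cases Ys')
  case Nil thus ?thesis by (simp add: homotopy_rhs_def algebra_simps)
next
  case (Cons Y2 Ys'')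
  have S1: "(\<Sum>i<length (Y # Ys') - 1. E_v P (merge_at (Y # Ys') i)) = E_v P ((Y * Y2) # Ys'') + (\<Sum>j<length Ys''. E_v P (Y # merge_at Ys' j))" for P
    using Cons by (simp add: sum.lessThan_Suc_shift merge_at_0 merge_at_Suc del: sum.lessThan_Suc)
  have S2: "(\<Sum>i<length Ys' - 1. E_v P (merge_at Ys' i)) = (\<Sum>j<length Ys''. E_v P (merge_at Ys' j))" for P
    using Cons by simp
  have bl: "butlast (Y # Ys') = Y # butlast Ys'" "last (Y # Ys') = last Ys'" using Cons by simp_all
  have ne: "Ys' \<noteq> []" "butlast (Y # Ys') \<noteq> []" using Cons by simp_all
  have c: "(case Ys' of [] \<Rightarrow> 0 | Y2 # Ys'' \<Rightarrow> (dia a (Y * Y2) + dia a Y * Y2 + Y * dia a Y2) * E_v Q Ys'')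
     = (dia a (Y * Y2) + dia a Y * Y2 + Y * dia a Y2) * E_v Q Ys''" using Cons by simp
  have t: "tl (Y # Ys') = Ys'" "hd (Y # Ys') = Y" "hd Ys' = Y2" "tl Ys' = Ys''" using Cons by simp_all
  have e1: "E_v (basis [a] * Q) Ys' = basis [a] * E_v Q Ys' + dia a Y2 * E_v Q Ys''"
    using Cons by (simp add: E_v_letter_prod)
  have A: "(\<Sum>j<length Ys''. E_v (basis [a] * Q) (Y # merge_at Ys' j))
     = basis [a] * (\<Sum>j<length Ys''. E_v Q (Y # merge_at Ys' j)) + dia a Y * (\<Sum>j<length Ys''. E_v Q (merge_at Ys' j))"
    by (simp add: E_v_letter_prod sum.distrib sum_distrib_left)
  have Rr1: "homotopy_rhs P (Y # Ys') = Y * E_v P Ys' + E_v P (Y # butlast Ys') * last Ys' + (E_v P ((Y * Y2) # Ys'') + (\<Sum>j<length Ys''. E_v P (Y # merge_at Ys' j)))" for P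
    unfolding homotopy_rhs_def using S1 bl t by simp
  have Rr2: "homotopy_rhs P Ys' = Y2 * E_v P Ys'' + E_v P (butlast Ys') * last Ys' + (\<Sum>j<length Ys''. E_v P (merge_at Ys' j))" for P
    unfolding homotopy_rhs_def using S2 ne t by simp
  show ?thesis
    unfolding Rr1 Rr2 c e1 A
    by (simp add: E_v_letter_prod algebra_simps)
qed

lemma homotopy_lhs_one: "homotopy_lhs 1 Ys = 0"
proof (cases "Ys = []")
  case True thus ?thesis by (simp add: homotopy_lhs_Nil)
next
  case False
  thus ?thesis unfolding homotopy_lhs_def by (simp add: E_v_one)
qed

lemma homotopy_rhs_one: "homotopy_rhs 1 Ys = 0"
proof (cases Ys)
  case Nil thus ?thesis by (simp add: homotopy_rhs_Nil)
next
  case (Cons Y Ys')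
  show ?thesis
  proof (cases Ys')
    case Nil thus ?thesis using Cons by (simp add: homotopy_rhs_def)
  next
    case (Cons Y2 Ys'')
    have "butlast Ys \<noteq> []" using Cons \<open>Ys = Y # Ys'\<close> by simp
    moreover have "merge_at Ys i \<noteq> []" for i by (simp add: merge_at_def)
    ultimately show ?thesis using Cons \<open>Ys = Y # Ys'\<close> by (simp add: homotopy_rhs_def E_v_one)
  qed
qed

lemma homotopy_lhs_eq_rhs_basis: "homotopy_lhs (basis x) Ys = homotopy_rhs (basis x) Ys"
proof (induction x arbitrary: Ys)
  case Nil thus ?case by (simp add: basis_Nil homotopy_lhs_one homotopy_rhs_one)
next
  case (Cons a x)
  show ?case
  proof (cases Ys)
    case Nil thus ?thesis by (simp add: homotopy_lhs_Nil homotopy_rhs_Nil)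
  next
    case (Cons Y Ys')
    show ?thesis
    proof (cases Ys')
      case Nil
      thus ?thesis using \<open>Ys = Y # Ys'\<close>
        by (simp add: basis_Cons[of a x] homotopy_lhs_letter_prod homotopy_rhs_letter_prod homotopy_lhs_letter_single Cons.IH homotopy_lhs_Nil homotopy_rhs_Nil add.commute)
    next
      case (Cons Y2 Ys'')
      thus ?thesis using \<open>Ys = Y # Ys'\<close>
        by (simp add: basis_Cons[of a x] homotopy_lhs_letter_prod homotopy_rhs_letter_prod homotopy_lhs_letter_single homotopy_lhs_letter_pair Cons.IH algebra_simps)
    qed
  qed
qed

lemma homotopy_lhs_lin_ext: "homotopy_lhs (lin_ext f X) Ys = lin_ext (\<lambda>x. homotopy_lhs (f x) Ys) X"
  by (simp add: homotopy_lhs_def E_v_lin_ext dO_v_lin_ext lin_ext_fadd lin_ext_fsum)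

lemma homotopy_rhs_lin_ext: "homotopy_rhs (lin_ext f X) Ys = lin_ext (\<lambda>x. homotopy_rhs (f x) Ys) X"
  by (simp add: homotopy_rhs_def E_v_lin_ext lin_ext_fadd lin_ext_fsum lin_ext_mult_left lin_ext_mult_right)

lemma homotopy_lhs_eq_rhs: "homotopy_lhs X Ys = homotopy_rhs X Ys"
proof -
  have "homotopy_lhs (lin_ext basis X) Ys = homotopy_rhs (lin_ext basis X) Ys" by (simp only: homotopy_lhs_lin_ext homotopy_rhs_lin_ext homotopy_lhs_eq_rhs_basis)
  thus ?thesis by simp
qed

section \<open>Back to finite sets\<close>

lemma E_word_v_single: "E_word_v a [w] = (\<Sum>k<length a. basis (take k a) * diamond_v (a ! k) w * basis (drop (Suc k) a))"
proof (induction a)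
  case Nil thus ?case by (simp add: E_word_v_Nil_Cons)
next
  case (Cons b a)
  have "E_word_v (b # a) [w] = basis [b] * E_word_v a [w] + diamond_v b w * basis a"
    by (simp add: E_word_v_Cons E_word_v_no_args)
  also have "\<dots> = (\<Sum>k<length (b # a). basis (take k (b # a)) * diamond_v ((b # a) ! k) w * basis (drop (Suc k) (b # a)))"
    by (simp add: Cons.IH sum.lessThan_Suc_shift sum_distrib_left basis_Nil basis_mult times_list_def mult.assoc[symmetric]
        del: sum.lessThan_Suc)
  finally show ?case .
qed

lemma vec_cup1_word: "vec (cup1_word A a w) = E_word_v a [w]"
proof -
  have "vec (cup1_word A a w) = (\<Sum>k<length a. lin_ext (\<lambda>c. basis (take k a @ c @ drop (Suc k) a)) (diamond_v (a ! k) w))"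
    unfolding cup1_word_def by (simp add: vec_zsum finite_zsum lin_ext_vec[symmetric] vec_diamond)
  also have "\<dots> = E_word_v a [w]"
    unfolding E_word_v_single by (simp add: basis_append mult_lin_ext_left[symmetric] mult_lin_ext_right[symmetric] mult.assoc)
  finally show ?thesis .
qed

lemma finite_E: "finite X \<Longrightarrow> \<forall>Y\<in>set Ys. finite Y \<Longrightarrow> finite (E A X Ys)"
  unfolding E_def by (intro finite_zsum finite_listset) auto

lemma finite_dO: "finite X \<Longrightarrow> finite (dO A X)"
  unfolding dO_def by (intro finite_zsum) auto

lemma finite_cup1_word: "finite (cup1_word A a w)"
  unfolding cup1_word_def by (intro finite_zsum) auto

lemma finite_cup1: "finite X \<Longrightarrow> finite Y \<Longrightarrow> finite (cup1 A X Y)"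
  unfolding cup1_def by (intro finite_zsum finite_cup1_word)

lemma dO_eq_supp: "finite X \<Longrightarrow> dO A X = supp (dO_v (vec X))"
  by (intro eq_suppI finite_dO vec_dO)

lemma E_eq_supp: "finite X \<Longrightarrow> \<forall>Y\<in>set Ys. finite Y \<Longrightarrow> E A X Ys = supp (E_v (vec X) (map vec Ys))"
  by (intro eq_suppI finite_E vec_E) auto

lemma cup1_eq_supp: "finite X \<Longrightarrow> finite Y \<Longrightarrow> cup1 A X Y = supp (E_v (vec X) [vec Y])"
  by (intro eq_suppI finite_cup1) (simp_all add: cup1_def E_v_def vec_zsum_lin_ext finite_zsum finite_cup1_word vec_cup1_word)

lemma jac_args_supp:
  "jac_args A (map supp Ys) (map supp Zs) is ns = map supp (jac_args_v Ys Zs is ns)"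
  unfolding jac_args_def jac_args_v_def
  by (simp add: map_concat take_map drop_map, intro arg_cong[where f = concat] map_cong refl)
     (simp add: E_eq_supp)

lemma Om_supp: "Om A x \<Longrightarrow> x = supp (vec x)"
  by (simp add: Om_def)

lemma Om_list_supp: "\<forall>y\<in>set ys. Om A y \<Longrightarrow> ys = map supp (map vec ys)"
  by (simp add: Om_def map_idI)

lemmas transfer_simps = zadd_eq_supp zsum_eq_supp omult_eq_supp dO_eq_supp E_eq_supp

lemma E_higher_homotopy:
  assumes "Om A x" "\<forall>y\<in>set ys. Om A y" "1 \<le> length ys"
  shows "zadd (zadd (dO A (E A x ys)) (E A (dO A x) ys))
            (zsum (\<lambda>i. E A x (ys[i := dO A (ys ! i)])) {..<length ys})
     = zadd (zadd (omult (hd ys) (E A x (tl ys))) (omult (E A x (butlast ys)) (last ys)))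
            (zsum (\<lambda>i. E A x (take i ys @ [omult (ys ! i) (ys ! Suc i)] @ drop (Suc (Suc i)) ys))
                  {..<length ys - 1})"
proof -
  obtain X Ys where "x = supp X" "ys = map supp Ys"
    using Om_supp[OF assms(1)] Om_list_supp[OF assms(2)] by blast
  moreover from this assms(3) have "Ys \<noteq> []" by auto
  moreover note homotopy_lhs_eq_rhs[of X Ys]
  ultimately show ?thesis
    by (simp add: transfer_simps homotopy_lhs_def homotopy_rhs_def merge_at_def
        hd_map last_map map_tl[symmetric] map_butlast[symmetric] take_map drop_map map_update[symmetric] ball_Un cong: zsum_cong)
qed

lemma E_distributivity:
  assumes "Om A x1" "Om A x2" "\<forall>y\<in>set ys. Om A y" "1 \<le> length ys"
  shows "E A (omult x1 x2) ys
     = zadd (zadd (omult x1 (E A x2 ys)) (omult (E A x1 ys) x2))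
            (zsum (\<lambda>p. omult (E A x1 (take p ys)) (E A x2 (drop p ys))) {1..<length ys})"
proof -
  obtain X1 X2 Ys where "x1 = supp X1" "x2 = supp X2" "ys = map supp Ys"
    using Om_supp[OF assms(1)] Om_supp[OF assms(2)] Om_list_supp[OF assms(3)] by blast
  moreover from this assms(4) have "Ys \<noteq> []" by auto
  ultimately show ?thesis
    by (simp add: transfer_simps E_v_distrib take_map drop_map cong: zsum_cong)
qed

lemma E_higher_pre_jacobi:
  assumes "Om A x" "\<forall>y\<in>set ys. Om A y" "\<forall>z\<in>set zs. Om A z"
  shows "E A (E A x ys) zs = zsum (\<lambda>(is, ns). E A x (jac_args A ys zs is ns)) (jac_index (length ys) (length zs))"
proof -
  obtain X Ys Zs where "x = supp X" "ys = map supp Ys" "zs = map supp Zs"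
    using Om_supp[OF assms(1)] Om_list_supp[OF assms(2)] Om_list_supp[OF assms(3)] by blast
  moreover note pre_jacobi[of X Ys Zs]
  ultimately show ?thesis
    by (simp add: transfer_simps jac_args_supp jac_sum_def split_def take_map drop_map cong: zsum_cong)
qed

lemma E_single_eq_cup1:
  assumes "Om A x" "Om A y"
  shows "E A x [y] = cup1 A x y"
  using assms by (simp add: Om_def E_eq_supp cup1_eq_supp)

end

theorem mainTheorem4:
  fixes A :: "'b dgba"
  assumes "connected_dg_bialgebra A"
  shows
   "(\<forall>x ys. Om A x \<and> (\<forall>y\<in>set ys. Om A y) \<and> 1 \<le> length ys \<longrightarrow>
       zadd (zadd (dO A (E A x ys)) (E A (dO A x) ys))
            (zsum (\<lambda>i. E A x (ys[i := dO A (ys ! i)])) {..<length ys})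
     = zadd (zadd (omult (hd ys) (E A x (tl ys))) (omult (E A x (butlast ys)) (last ys)))
            (zsum (\<lambda>i. E A x (take i ys @ [omult (ys ! i) (ys ! Suc i)] @ drop (Suc (Suc i)) ys))
                  {..<length ys - 1})) \<and>
    (\<forall>x1 x2 ys. Om A x1 \<and> Om A x2 \<and> (\<forall>y\<in>set ys. Om A y) \<and> 1 \<le> length ys \<longrightarrow>
       E A (omult x1 x2) ys
     = zadd (zadd (omult x1 (E A x2 ys)) (omult (E A x1 ys) x2))
            (zsum (\<lambda>p. omult (E A x1 (take p ys)) (E A x2 (drop p ys))) {1..<length ys})) \<and>
    (\<forall>x ys zs. Om A x \<and> (\<forall>y\<in>set ys. Om A y) \<and> (\<forall>z\<in>set zs. Om A z) \<and>
         1 \<le> length ys \<and> 1 \<le> length zs \<longrightarrow>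
       E A (E A x ys) zs
     = zsum (\<lambda>(is, ns). E A x (jac_args A ys zs is ns)) (jac_index (length ys) (length zs))) \<and>
    (\<forall>x y. Om A x \<and> Om A y \<longrightarrow> E A x [y] = cup1 A x y)"
proof -
  interpret cdg_bialgebra A using assms by unfold_locales
  show ?thesis
    by (intro conjI allI impI; elim conjE;
        rule E_higher_homotopy E_distributivity E_higher_pre_jacobi E_single_eq_cup1; assumption)
qed

end
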